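(* Let $K\subset\mathbb{R}^n$ be a closed set whose complement $K^c$ is a bounded open set, and let $\alpha,\lambda_{\max}>0$, $\mu\in(0,1]$ with $r_\mu^\alpha(K)>\alpha+\lambda_{\max}$. Let $R_{\max}=R_{\max}(K)<\infty$ and $\tilde\mu=\tilde\mu_{\mu,\lambda_{\max}}^{\alpha,\alpha}(K)>0$. Then for any $\lambda_{\min}\in(0,\lambda_{\max}]$, the map $\lambda\mapsto\mathrm{ax}_\lambda^\alpha(K)$ is $\frac{R_{\max}^2}{\alpha\lambda_{\min}\tilde\mu^2}$-Lipschitz on $[\lambda_{\min},\lambda_{\max}]$ with respect to the Hausdorff distance, i.e. $d_H(\mathrm{ax}_{\lambda_1}^\alpha(K),\mathrm{ax}_{\lambda_2}^\alpha(K))\le\frac{R_{\max}^2}{\alpha\lambda_{\min}\tilde\mu^2}|\lambda_1-\lambda_2|$ for $\lambda_1,\lambda_2\in[\lambda_{\min},\lambda_{\max}]$.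
   Context: For a closed set $K\subset\mathbb{R}^n$ with bounded open complement: $R_K(x)=d(x,K)$; $\Theta_K(x)=\{y\in K:\|x-y\|=R_K(x)\}$; for bounded $S$, $\mathrm{center}(S)$ and $\mathrm{radius}(S)$ are the center and radius of the smallest ball enclosing $S$; $\mathcal F_K(x)=\mathrm{radius}(\Theta_K(x))$; for $x\notin K$, $\nabla_K(x)=(x-\mathrm{center}(\Theta_K(x)))/R_K(x)$. $R_{\max}(K)=\max_{x\in K^c}R_K(x)$. Critical function: $\chi_K(t)=\inf\{\|\nabla_K(x)\|:R_K(x)=t\}$ for $t\in(0,R_{\max}(K)]$ (infimum of empty set $=1$). $K^{\oplus\alpha}=\{x:d(x,K)\le\alpha\}$. For $\mu\in(0,1]$, $\alpha\ge0$: $r_\mu^\alpha(K)=\inf\{t>\alpha:\chi_K(t)<\mu\}$. $\mathrm{ax}_\lambda^\alpha(K)=\{x:\mathcal F_{K^{\oplus\alpha}}(x)\ge\lambda\}$. $\tilde\mu_{\mu,\lambda}^{\alpha,\alpha'}(K)=\min\big(\mu,\sqrt{1-(\lambda/(r_\mu^{\alpha'}(K)-\alpha))^2}\big)$. $d_H$ is the Hausdorff distance. *)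

theory Defs
  imports "HOL-Analysis.Analysis"
begin

definition enc_radius :: "'a::euclidean_space set \<Rightarrow> real" where
  "enc_radius S = Inf {r. \<exists>c. S \<subseteq> cball c r}"

definition enc_center :: "'a::euclidean_space set \<Rightarrow> 'a" where
  "enc_center S = (SOME c. S \<subseteq> cball c (enc_radius S))"

definition RK :: "'a::euclidean_space set \<Rightarrow> 'a \<Rightarrow> real" where
  "RK K x = infdist x K"

definition ThetaK :: "'a::euclidean_space set \<Rightarrow> 'a \<Rightarrow> 'a set" where
  "ThetaK K x = {y \<in> K. dist x y = RK K x}"

definition FK :: "'a::euclidean_space set \<Rightarrow> 'a \<Rightarrow> real" where
  "FK K x = enc_radius (ThetaK K x)"

definition gradK :: "'a::euclidean_space set \<Rightarrow> 'a \<Rightarrow> 'a" where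
  "gradK K x = (1 / RK K x) *\<^sub>R (x - enc_center (ThetaK K x))"

definition Rmax :: "'a::euclidean_space set \<Rightarrow> real" where
  "Rmax K = Sup (RK K ` (- K))"

definition chiK :: "'a::euclidean_space set \<Rightarrow> real \<Rightarrow> real" where
  "chiK K t = (if {x. RK K x = t} = {} then 1
               else Inf {norm (gradK K x) | x. RK K x = t})"

definition offset :: "'a::euclidean_space set \<Rightarrow> real \<Rightarrow> 'a set" where
  "offset K \<alpha> = {x. infdist x K \<le> \<alpha>}"

text \<open>r_mu^alpha(K), extended-real valued (inf of empty set = infinity).\<close>
definition r_mu :: "real \<Rightarrow> real \<Rightarrow> 'a::euclidean_space set \<Rightarrow> ereal" where
  "r_mu \<mu> \<alpha> K = Inf {ereal t | t. t > \<alpha> \<and> chiK K t < \<mu>}"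

definition axl :: "real \<Rightarrow> real \<Rightarrow> 'a::euclidean_space set \<Rightarrow> 'a set" where
  "axl lam \<alpha> K = {x. FK (offset K \<alpha>) x \<ge> lam}"

text \<open>tilde mu; when r = infinity, lambda/(r - alpha) = 0 and the min is mu.\<close>
definition tilde_mu :: "real \<Rightarrow> real \<Rightarrow> real \<Rightarrow> real \<Rightarrow> 'a::euclidean_space set \<Rightarrow> real" where
  "tilde_mu \<mu> lam \<alpha> \<alpha>' K =
     (if r_mu \<mu> \<alpha>' K = \<infinity> then \<mu>
      else min \<mu> (sqrt (1 - (lam / (real_of_ereal (r_mu \<mu> \<alpha>' K) - \<alpha>))\<^sup>2)))"

definition dH :: "'a::metric_space set \<Rightarrow> 'a set \<Rightarrow> ereal" where
  "dH A B = (if A = {} \<and> B = {} then 0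
             else if A = {} \<or> B = {} then \<infinity>
             else max (SUP x\<in>A. ereal (infdist x B)) (SUP y\<in>B. ereal (infdist y A)))"

end

theory Submission
  imports Defs
begin

(* Write L for the offset of K by alpha. For R = d(z, K) > alpha the nearest points of z in L are
   the images of those in K under the homothety of centre z and ratio (R - alpha) / R, so
   F_L(z) = (R - alpha) / R * F_K(z).

   Given x with F_L(x) >= a and b > a, maximise phi(z) = min (F_L(z), b) - |x - z| / C over the
   ball of radius C (b - a) about x. F_L is upper semicontinuous, so a maximiser z exists, and it
   is global because phi < a <= phi(x) off the ball. If F_L(z) < b, the hypothesis on r_mu bounds
   the gradient of d_K at z below by tilde_mu. Moving to the farthest point w from K in a small
   ball around z then increases d_K at a rate proportional to tilde_mu, while the Lagrange
   condition at w together with the semiconcavity of d_K^2 shows that F_K does not decrease.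
   Hence F_L grows by more than |z - w| / C, contradicting maximality; so F_L(z) >= b. *)

section \<open>Smallest enclosing balls\<close>

lemma enc_radius_le:
  assumes "S \<noteq> {}" "S \<subseteq> cball c r"
  shows "enc_radius S \<le> r"
proof -
  obtain y where "y \<in> S" using assms(1) by blast
  then have "bdd_below {r. \<exists>c. S \<subseteq> cball c r}"
    by (intro bdd_belowI[of _ 0]) (auto intro: order_trans[OF zero_le_dist] simp: subset_iff)
  then show ?thesis
    unfolding enc_radius_def using assms(2) by (intro cInf_lower) auto
qed

lemma enc_radius_ge:
  assumes "bounded S" "\<And>c r. S \<subseteq> cball c r \<Longrightarrow> m \<le> r"
  shows "m \<le> enc_radius S"
proof -
  obtain c r where "S \<subseteq> cball c r" using assms(1) bounded_subset_cball by blast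
  then show ?thesis unfolding enc_radius_def using assms(2)
    by (intro cInf_greatest) auto
qed

lemma enc_radius_nonneg:
  assumes "bounded S" "S \<noteq> {}"
  shows "0 \<le> enc_radius S"
  using assms by (intro enc_radius_ge) (auto simp: subset_iff intro: order_trans[OF zero_le_dist])

lemma enc_radius_singleton: "enc_radius {x::'a::euclidean_space} = 0"
  by (intro antisym enc_radius_le[of "{x}" x] enc_radius_nonneg) auto

text \<open>Minimise the radius over the compact set of enclosing balls (centre, radius) whose radius
  is at most that of one fixed enclosing ball.\<close>

lemma enclosing_ball_attained:
  fixes S :: "'a::euclidean_space set"
  assumes "bounded S" "S \<noteq> {}"
  shows "\<exists>c. S \<subseteq> cball c (enc_radius S)"
proof -
  obtain y0 where y0: "y0 \<in> S" using assms(2) by blast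
  obtain r1 where "\<forall>y\<in>S. dist y0 y \<le> r1" using bounded_any_center[of S y0] assms(1) by blast
  then have r1: "S \<subseteq> cball y0 r1" by auto
  define P where "P = {p::'a \<times> real. S \<subseteq> cball (fst p) (snd p) \<and> snd p \<le> r1}"
  have "P = (\<Inter>y\<in>S. {p. dist (fst p) y \<le> snd p}) \<inter> {p. snd p \<le> r1}"
    unfolding P_def by (auto simp: subset_iff)
  then have "closed P"
    by (simp only:) (intro closed_Int closed_INT ballI closed_Collect_le continuous_intros)
  moreover have "P \<subseteq> cball y0 r1 \<times> cball 0 r1"
  proof
    fix p assume "p \<in> P"
    then have p: "S \<subseteq> cball (fst p) (snd p)" "snd p \<le> r1" by (auto simp: P_def)
    then have "dist (fst p) y0 \<le> snd p" using y0 by auto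
    moreover from this have "0 \<le> snd p" by (rule order_trans[OF zero_le_dist])
    ultimately show "p \<in> cball y0 r1 \<times> cball 0 r1" using p
      by (cases p) (auto simp: dist_commute)
  qed
  then have "bounded P" by (rule bounded_subset[OF bounded_Times[OF bounded_cball bounded_cball]])
  ultimately have "compact P" by (simp add: compact_eq_bounded_closed)
  moreover have "(y0, r1) \<in> P" using r1 by (simp add: P_def)
  ultimately obtain p0 where p0: "p0 \<in> P" "\<And>p. p \<in> P \<Longrightarrow> snd p0 \<le> snd p"
    using continuous_attains_inf[of P snd] continuous_on_snd[OF continuous_on_id] by blast
  have "enc_radius S = snd p0"
  proof (rule antisym)
    show "enc_radius S \<le> snd p0" using p0(1) assms(2) by (intro enc_radius_le) (auto simp: P_def)
    show "snd p0 \<le> enc_radius S"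
    proof (rule enc_radius_ge[OF assms(1)])
      fix c r assume "S \<subseteq> cball c r"
      then show "snd p0 \<le> r"
        using p0 by (cases "r \<le> r1") (auto simp: P_def)
    qed
  qed
  then show ?thesis using p0(1) by (auto simp: P_def)
qed

lemma subset_cball_enc_center:
  fixes S :: "'a::euclidean_space set"
  assumes "bounded S" "S \<noteq> {}"
  shows "S \<subseteq> cball (enc_center S) (enc_radius S)"
  unfolding enc_center_def using enclosing_ball_attained[OF assms] by (rule someI_ex)

lemma enc_radius_homothety:
  fixes S :: "'a::euclidean_space set"
  assumes "bounded S" "S \<noteq> {}" "s > 0"
  shows "enc_radius ((\<lambda>k. z + s *\<^sub>R (k - z)) ` S) = s * enc_radius S"
proof -
  define h where "h = (\<lambda>k::'a. z + s *\<^sub>R (k - z))"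
  have dh: "dist (h a) (h b) = s * dist a b" for a b
  proof -
    have "h a - h b = s *\<^sub>R (a - b)" by (simp add: h_def algebra_simps)
    then show ?thesis using assms(3) by (simp add: dist_norm)
  qed
  define F where "F = enc_radius S"
  have sub: "h ` S \<subseteq> cball (h (enc_center S)) (s * F)"
    using subset_cball_enc_center[OF assms(1,2)] assms(3) by (auto simp: dh F_def)
  have "enc_radius (h ` S) \<le> s * F"
    using assms(2) by (intro enc_radius_le[OF _ sub]) simp
  moreover have "s * F \<le> enc_radius (h ` S)"
  proof (rule enc_radius_ge)
    show "bounded (h ` S)" using sub bounded_cball bounded_subset by blast
  next
    fix c r assume cr: "h ` S \<subseteq> cball c r"
    define c' where "c' = z + (1 / s) *\<^sub>R (c - z)"
    have "h c' = c" using assms(3) by (simp add: h_def c'_def algebra_simps)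
    then have "S \<subseteq> cball c' (r / s)"
      using cr assms(3) dh[of c'] by (auto simp: subset_iff field_simps)
    then have "F \<le> r / s" unfolding F_def by (rule enc_radius_le[OF assms(2)])
    then show "s * F \<le> r" using assms(3) by (simp add: field_simps)
  qed
  ultimately show ?thesis by (simp add: h_def F_def)
qed

lemma barycenter_sum_sq_dist:
  fixes p b :: "'a::real_inner"
  assumes "finite Y" "sum u Y = 1" "b = (\<Sum>y\<in>Y. u y *\<^sub>R y)"
  shows "(\<Sum>y\<in>Y. u y * (norm (y - p))\<^sup>2) = (\<Sum>y\<in>Y. u y * (norm (y - b))\<^sup>2) + (norm (b - p))\<^sup>2"
proof -
  have expand: "(norm (y - p))\<^sup>2 = (norm (y - b))\<^sup>2 + 2 * inner (y - b) (b - p) + (norm (b - p))\<^sup>2" for y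
    using dot_norm[of "y - b" "b - p"] by simp
  have "(\<Sum>y\<in>Y. u y * inner (y - b) (b - p)) = inner (\<Sum>y\<in>Y. u y *\<^sub>R (y - b)) (b - p)"
    by (simp add: inner_sum_left)
  also have "(\<Sum>y\<in>Y. u y *\<^sub>R (y - b)) = (\<Sum>y\<in>Y. u y *\<^sub>R y) - (\<Sum>y\<in>Y. u y) *\<^sub>R b"
    by (simp add: scaleR_diff_right sum_subtractf scaleR_sum_left)
  finally have cross: "(\<Sum>y\<in>Y. u y * inner (y - b) (b - p)) = 0" using assms by simp
  have "(\<Sum>y\<in>Y. u y * (norm (y - p))\<^sup>2)
      = (\<Sum>y\<in>Y. u y * (norm (y - b))\<^sup>2 + 2 * (u y * inner (y - b) (b - p)) + u y * (norm (b - p))\<^sup>2)"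
    by (rule sum.cong[OF refl]) (subst expand, simp add: algebra_simps)
  also have "\<dots> = (\<Sum>y\<in>Y. u y * (norm (y - b))\<^sup>2) + (\<Sum>y\<in>Y. 2 * (u y * inner (y - b) (b - p)))
        + (\<Sum>y\<in>Y. u y * (norm (b - p))\<^sup>2)"
    by (simp add: sum.distrib)
  also have "\<dots> = (\<Sum>y\<in>Y. u y * (norm (y - b))\<^sup>2) + 2 * (\<Sum>y\<in>Y. u y * inner (y - b) (b - p))
        + (\<Sum>y\<in>Y. u y) * (norm (b - p))\<^sup>2"
    by (simp add: sum_distrib_left sum_distrib_right)
  finally show ?thesis using cross assms(2) by simp
qed

lemma weighted_avg_ge:
  assumes "\<And>y. y \<in> Y \<Longrightarrow> m \<le> f y" "\<And>y. y \<in> Y \<Longrightarrow> 0 \<le> u y" "sum u Y = 1"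
  shows "m \<le> (\<Sum>y\<in>Y. u y * (f y :: real))"
proof -
  have "(\<Sum>y\<in>Y. u y * m) \<le> (\<Sum>y\<in>Y. u y * f y)"
    by (rule sum_mono) (use assms in \<open>simp add: mult_left_mono\<close>)
  then show ?thesis using assms(3) by (simp add: sum_distrib_right[symmetric])
qed

lemma weighted_sum_sq_dist_le_enc_radius:
  fixes S :: "'a::euclidean_space set"
  assumes "bounded S" "finite Y" "Y \<subseteq> S" "\<And>y. y \<in> Y \<Longrightarrow> 0 \<le> u y" "sum u Y = 1"
    "b = (\<Sum>y\<in>Y. u y *\<^sub>R y)"
  shows "(\<Sum>y\<in>Y. u y * (norm (y - b))\<^sup>2) \<le> (enc_radius S)\<^sup>2"
proof -
  let ?V = "\<Sum>y\<in>Y. u y * (norm (y - b))\<^sup>2"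
  have V0: "0 \<le> ?V" using assms(4) by (intro sum_nonneg) auto
  have "sqrt ?V \<le> enc_radius S"
  proof (rule enc_radius_ge[OF assms(1)])
    fix c r assume sub: "S \<subseteq> cball c r"
    obtain y0 where "y0 \<in> Y" using assms(5) by fastforce
    then have r0: "0 \<le> r" using sub assms(3) by (auto simp: subset_iff intro: order_trans[OF zero_le_dist])
    have "?V \<le> (\<Sum>y\<in>Y. u y * (norm (y - c))\<^sup>2)"
      using barycenter_sum_sq_dist[OF assms(2,5,6), of c] by simp
    also have "\<dots> \<le> (\<Sum>y\<in>Y. u y * r\<^sup>2)"
    proof (rule sum_mono)
      fix y assume "y \<in> Y"
      then have "norm (y - c) \<le> r" using sub assms(3) by (auto simp: dist_norm norm_minus_commute subset_iff)
      then show "u y * (norm (y - c))\<^sup>2 \<le> u y * r\<^sup>2"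
        using assms(4)[OF \<open>y \<in> Y\<close>] by (simp add: mult_left_mono power_mono)
    qed
    also have "\<dots> = r\<^sup>2" using assms(5) by (simp add: sum_distrib_right[symmetric])
    finally show "sqrt ?V \<le> r" using r0 real_le_lsqrt by blast
  qed
  then have "(sqrt ?V)\<^sup>2 \<le> (enc_radius S)\<^sup>2" using V0 by (intro power_mono) auto
  then show ?thesis using V0 by simp
qed

lemma compact_sup_dist_lt:
  fixes T :: "'a::metric_space set"
  assumes "compact T" "0 < F" "\<And>y. y \<in> T \<Longrightarrow> dist c y < F"
  obtains G where "0 \<le> G" "G < F" "\<And>y. y \<in> T \<Longrightarrow> dist c y \<le> G"
proof (cases "T = {}")
  case True
  then show ?thesis using that[of 0] assms(2) by auto
next
  case False
  obtain ym where "ym \<in> T" "\<And>y. y \<in> T \<Longrightarrow> dist c y \<le> dist c ym"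
    using continuous_attains_sup[OF assms(1) False continuous_on_dist[OF continuous_on_const continuous_on_id]]
    by blast
  then show ?thesis using that[of "dist c ym"] assms(3) by auto
qed

lemma sq_dist_shift_le:
  fixes c a y :: "'a::real_inner"
  assumes "dist c y \<le> F" "\<delta> / 2 < inner a (y - c)" "0 < \<epsilon>" "\<epsilon> * (norm a)\<^sup>2 \<le> \<delta> / 2"
  shows "(dist (c + \<epsilon> *\<^sub>R a) y)\<^sup>2 \<le> F\<^sup>2 - \<epsilon> * \<delta> / 2"
proof -
  have "c + \<epsilon> *\<^sub>R a - y = - ((y - c) - \<epsilon> *\<^sub>R a)" by simp
  then have "dist (c + \<epsilon> *\<^sub>R a) y = norm ((y - c) - \<epsilon> *\<^sub>R a)"
    by (simp only: dist_norm norm_minus_cancel)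
  then have "(dist (c + \<epsilon> *\<^sub>R a) y)\<^sup>2 = (norm (y - c))\<^sup>2 - 2 * \<epsilon> * inner a (y - c) + \<epsilon>\<^sup>2 * (norm a)\<^sup>2"
    using dot_norm_neg[of "y - c" "\<epsilon> *\<^sub>R a"] by (simp add: inner_commute power_mult_distrib)
  moreover have "(norm (y - c))\<^sup>2 \<le> F\<^sup>2"
    using assms(1) by (simp add: dist_norm norm_minus_commute power_mono)
  moreover have "\<epsilon> * \<delta> \<le> 2 * \<epsilon> * inner a (y - c)"
    using mult_left_mono[of "\<delta> / 2" "inner a (y - c)" \<epsilon>] assms(2,3) by simp
  moreover have "\<epsilon>\<^sup>2 * (norm a)\<^sup>2 \<le> \<epsilon> * \<delta> / 2"
    using mult_left_mono[OF assms(4), of \<epsilon>] assms(3) by (simp add: power2_eq_square mult.assoc)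
  ultimately show ?thesis by linarith
qed

text \<open>Moving the centre a little in direction \<open>a\<close> brings the points with large component along
  \<open>a\<close> strictly inside, while the others had room to spare.\<close>

lemma cball_shift_shrinks:
  fixes c a :: "'a::real_inner"
  assumes S: "S \<subseteq> cball c F" and G: "0 \<le> G" "G < F" and "0 < \<delta>"
    and near: "\<And>y. y \<in> S \<Longrightarrow> inner a (y - c) \<le> \<delta> / 2 \<Longrightarrow> dist c y \<le> G"
  obtains c' F' where "F' < F" "S \<subseteq> cball c' F'"
proof -
  define \<epsilon> where "\<epsilon> = min ((F - G) / (2 * (norm a + 1))) (\<delta> / (2 * ((norm a)\<^sup>2 + 1)))"
  have e0: "0 < \<epsilon>" using G \<open>0 < \<delta>\<close> by (simp add: \<epsilon>_def add_nonneg_pos)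
  have "\<epsilon> * (2 * (norm a + 1)) \<le> F - G" "\<epsilon> * (2 * ((norm a)\<^sup>2 + 1)) \<le> \<delta>"
    by (simp_all add: \<epsilon>_def pos_le_divide_eq[symmetric] add_nonneg_pos)
  moreover have "\<epsilon> * norm a < \<epsilon> * (2 * (norm a + 1))" "\<epsilon> * (norm a)\<^sup>2 \<le> \<epsilon> * ((norm a)\<^sup>2 + 1)"
    using e0 by (simp_all add: add_nonneg_pos)
  ultimately have e1: "\<epsilon> * norm a < F - G" and e2: "\<epsilon> * (norm a)\<^sup>2 \<le> \<delta> / 2" by linarith+
  define F' where "F' = max (G + \<epsilon> * norm a) (sqrt (F\<^sup>2 - \<epsilon> * \<delta> / 2))"
  have "sqrt (F\<^sup>2 - \<epsilon> * \<delta> / 2) < sqrt (F\<^sup>2)"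
    using e0 \<open>0 < \<delta>\<close> by (intro real_sqrt_less_mono) simp
  then have "F' < F" using e1 G by (simp add: F'_def)
  moreover have "S \<subseteq> cball (c + \<epsilon> *\<^sub>R a) F'"
  proof
    fix y assume yS: "y \<in> S"
    show "y \<in> cball (c + \<epsilon> *\<^sub>R a) F'"
    proof (cases "inner a (y - c) \<le> \<delta> / 2")
      case True
      have "dist (c + \<epsilon> *\<^sub>R a) y \<le> dist c y + dist c (c + \<epsilon> *\<^sub>R a)"
        by (metis dist_commute dist_triangle)
      also have "\<dots> \<le> G + \<epsilon> * norm a" using near[OF yS True] e0 by (simp add: dist_norm)
      finally show ?thesis by (simp add: F'_def)
    next
      case False
      then have "(dist (c + \<epsilon> *\<^sub>R a) y)\<^sup>2 \<le> F\<^sup>2 - \<epsilon> * \<delta> / 2"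
        using S yS e0 e2 by (intro sq_dist_shift_le) auto
      then have "dist (c + \<epsilon> *\<^sub>R a) y \<le> sqrt (F\<^sup>2 - \<epsilon> * \<delta> / 2)" by (simp add: real_le_rsqrt)
      then show ?thesis by (simp add: F'_def)
    qed
  qed
  ultimately show ?thesis by (rule that)
qed

text \<open>Otherwise a hyperplane separates the centre from the farthest points, and shifting the
  centre towards them yields a smaller enclosing ball.\<close>

lemma enc_center_in_convex_hull:
  fixes S :: "'a::euclidean_space set"
  assumes "compact S" "S \<noteq> {}"
  shows "enc_center S \<in> convex hull {y\<in>S. dist (enc_center S) y = enc_radius S}"
proof (rule ccontr)
  define c where "c = enc_center S"
  define F where "F = enc_radius S"
  define A where "A = {y\<in>S. dist c y = F}"
  assume "enc_center S \<notin> convex hull {y\<in>S. dist (enc_center S) y = enc_radius S}"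
  then have cA: "c \<notin> convex hull A" by (simp add: c_def F_def A_def)
  have SF: "S \<subseteq> cball c F"
    using subset_cball_enc_center[OF compact_imp_bounded[OF assms(1)] assms(2)] by (simp add: c_def F_def)
  have "A = S \<inter> sphere c F" by (auto simp: A_def)
  then have "closed (convex hull A)"
    using assms(1) by (simp add: compact_Int_closed compact_convex_hull compact_imp_closed)
  from separating_hyperplane_closed_point[OF convex_convex_hull this cA]
  obtain a b where ab: "inner a c < b" "\<And>x. x \<in> convex hull A \<Longrightarrow> b < inner a x" by blast
  define \<delta> where "\<delta> = b - inner a c"
  have "0 < \<delta>" using ab(1) by (simp add: \<delta>_def)
  have far: "\<delta> < inner a (y - c)" if "y \<in> A" for y
    using ab(2)[OF hull_inc[OF that]] by (simp add: \<delta>_def inner_diff_right)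
  have "0 < F"
  proof (rule ccontr)
    assume "\<not> 0 < F"
    then have "dist c y \<le> 0" if "y \<in> S" for y
      using SF that by (meson mem_cball not_less order_trans subsetD)
    then have "S = {c}" using assms(2) by auto
    then have "c \<in> convex hull A" using \<open>\<not> 0 < F\<close> SF by (auto simp: A_def intro: hull_inc)
    then show False using cA by contradiction
  qed
  define T where "T = S \<inter> {y. inner a (y - c) \<le> \<delta> / 2}"
  have "closed {y. inner a (y - c) \<le> \<delta> / 2}" by (auto intro!: closed_Collect_le continuous_intros)
  then have "compact T" using assms(1) by (simp add: T_def compact_Int_closed)
  moreover have "dist c y < F" if "y \<in> T" for y
    using that SF far[of y] \<open>0 < \<delta>\<close> by (force simp: T_def A_def)
  ultimately obtain G where G: "0 \<le> G" "G < F" "\<And>y. y \<in> T \<Longrightarrow> dist c y \<le> G"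
    using compact_sup_dist_lt \<open>0 < F\<close> by blast
  have "dist c y \<le> G" if "y \<in> S" "inner a (y - c) \<le> \<delta> / 2" for y
    using G(3) that by (simp add: T_def)
  then obtain c' F' where "F' < F" "S \<subseteq> cball c' F'"
    by (rule cball_shift_shrinks[OF SF G(1,2) \<open>0 < \<delta>\<close>])
  then show False using enc_radius_le[OF assms(2)] by (force simp: F_def)
qed

section \<open>Nearest points\<close>

lemma ThetaK_eq: "ThetaK K x = {y \<in> K. dist x y = infdist x K}"
  by (simp add: ThetaK_def RK_def)

lemma ThetaK_nonempty:
  fixes K :: "'a::euclidean_space set"
  assumes "closed K" "K \<noteq> {}"
  shows "ThetaK K x \<noteq> {}"
  using infdist_attains_inf[OF assms, of x] by (metis (mono_tags) ThetaK_eq empty_Collect_eq)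

lemma compact_ThetaK:
  fixes K :: "'a::euclidean_space set"
  assumes "closed K"
  shows "compact (ThetaK K x)"
proof -
  have "ThetaK K x = K \<inter> sphere x (infdist x K)" by (auto simp: ThetaK_eq)
  then show ?thesis using assms by (simp add: closed_Int_compact)
qed

lemma ThetaK_subset_cball:
  fixes K :: "'a::euclidean_space set"
  assumes "closed K" "K \<noteq> {}"
  shows "ThetaK K z \<subseteq> cball (enc_center (ThetaK K z)) (FK K z)"
  unfolding FK_def
  by (intro subset_cball_enc_center compact_imp_bounded compact_ThetaK ThetaK_nonempty assms)

lemma FK_nonneg:
  fixes K :: "'a::euclidean_space set"
  assumes "closed K" "K \<noteq> {}"
  shows "0 \<le> FK K z"
  unfolding FK_def
  by (intro enc_radius_nonneg compact_imp_bounded compact_ThetaK ThetaK_nonempty assms)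

lemma enc_center_ThetaK_convex_comb:
  fixes K :: "'a::euclidean_space set"
  assumes "closed K" "K \<noteq> {}"
  obtains Y u where "finite Y" "Y \<subseteq> ThetaK K z"
    "\<And>y. y \<in> Y \<Longrightarrow> dist (enc_center (ThetaK K z)) y = FK K z"
    "\<And>y. y \<in> Y \<Longrightarrow> 0 \<le> u y" "sum u Y = 1"
    "enc_center (ThetaK K z) = (\<Sum>y\<in>Y. u y *\<^sub>R y)"
proof -
  have "enc_center (ThetaK K z) \<in> convex hull {y\<in>ThetaK K z. dist (enc_center (ThetaK K z)) y = FK K z}"
    unfolding FK_def using assms by (intro enc_center_in_convex_hull compact_ThetaK ThetaK_nonempty)
  then show ?thesis
    unfolding convex_hull_explicit using that by (smt (verit) mem_Collect_eq subset_iff)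
qed

lemma infdist_sq_eq:
  fixes K :: "'a::euclidean_space set"
  assumes "closed K" "K \<noteq> {}"
  shows "(infdist z K)\<^sup>2 = (norm (z - enc_center (ThetaK K z)))\<^sup>2 + (FK K z)\<^sup>2"
proof -
  define c where "c = enc_center (ThetaK K z)"
  obtain Y u where Y: "finite Y" "Y \<subseteq> ThetaK K z" "\<And>y. y \<in> Y \<Longrightarrow> dist c y = FK K z"
    "\<And>y. y \<in> Y \<Longrightarrow> 0 \<le> u y" "sum u Y = 1" "c = (\<Sum>y\<in>Y. u y *\<^sub>R y)"
    unfolding c_def by (rule enc_center_ThetaK_convex_comb[OF assms, where z=z]) blast
  have "(\<Sum>y\<in>Y. u y * (norm (y - z))\<^sup>2) = (\<Sum>y\<in>Y. u y * (norm (y - c))\<^sup>2) + (norm (c - z))\<^sup>2"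
    by (rule barycenter_sum_sq_dist[OF Y(1,5,6)])
  moreover have "(\<Sum>y\<in>Y. u y * (norm (y - z))\<^sup>2) = (\<Sum>y\<in>Y. u y * (infdist z K)\<^sup>2)"
    using Y(2) by (intro sum.cong) (auto simp: ThetaK_eq dist_norm norm_minus_commute)
  moreover have "(\<Sum>y\<in>Y. u y * (norm (y - c))\<^sup>2) = (\<Sum>y\<in>Y. u y * (FK K z)\<^sup>2)"
    using Y(3) by (intro sum.cong) (auto simp: dist_norm norm_minus_commute)
  ultimately show ?thesis
    using Y(5) by (simp add: c_def norm_minus_commute sum_distrib_right[symmetric])
qed

lemma infdist_sq_semiconcave:
  fixes K :: "'a::euclidean_space set"
  assumes "closed K" "K \<noteq> {}"
  shows "(infdist w K)\<^sup>2 \<le> (infdist z K)\<^sup>2 + 2 * inner (w - z) (z - enc_center (ThetaK K z)) + (norm (w - z))\<^sup>2"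
proof -
  define c where "c = enc_center (ThetaK K z)"
  obtain Y u where Y: "finite Y" "Y \<subseteq> ThetaK K z" "\<And>y. y \<in> Y \<Longrightarrow> dist c y = FK K z"
    "\<And>y. y \<in> Y \<Longrightarrow> 0 \<le> u y" "sum u Y = 1" "c = (\<Sum>y\<in>Y. u y *\<^sub>R y)"
    unfolding c_def by (rule enc_center_ThetaK_convex_comb[OF assms, where z=z]) blast
  have "(infdist w K)\<^sup>2 \<le> (\<Sum>y\<in>Y. u y * (norm (y - w))\<^sup>2)"
  proof (rule weighted_avg_ge[OF _ Y(4,5)])
    fix y assume "y \<in> Y"
    then have "infdist w K \<le> norm (y - w)"
      using Y(2) infdist_le[of y K w] by (auto simp: ThetaK_eq dist_norm norm_minus_commute)
    then show "(infdist w K)\<^sup>2 \<le> (norm (y - w))\<^sup>2" by (rule power_mono[OF _ infdist_nonneg])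
  qed
  also have "\<dots> = (\<Sum>y\<in>Y. u y * (norm (y - c))\<^sup>2) + (norm (c - w))\<^sup>2"
    by (rule barycenter_sum_sq_dist[OF Y(1,5,6)])
  also have "(\<Sum>y\<in>Y. u y * (norm (y - c))\<^sup>2) = (FK K z)\<^sup>2"
    using Y(3,5) by (simp add: dist_norm norm_minus_commute sum_distrib_right[symmetric])
  also have "(norm (c - w))\<^sup>2 = (norm (z - c))\<^sup>2 + 2 * inner (w - z) (z - c) + (norm (w - z))\<^sup>2"
    using dot_norm[of "z - c" "w - z"] by (simp add: norm_minus_commute inner_commute)
  finally show ?thesis using infdist_sq_eq[OF assms, of z] by (simp add: c_def)
qed

lemma inner_ThetaK_ge:
  fixes K :: "'a::euclidean_space set"
  assumes "closed K" "K \<noteq> {}" "y \<in> ThetaK K z"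
  shows "(norm (z - enc_center (ThetaK K z)))\<^sup>2 \<le> inner (z - y) (z - enc_center (ThetaK K z))"
proof -
  define c where "c = enc_center (ThetaK K z)"
  have "(norm (y - c))\<^sup>2 \<le> (FK K z)\<^sup>2"
    using ThetaK_subset_cball[OF assms(1,2), of z] assms(3)
    by (auto simp: c_def dist_norm norm_minus_commute intro!: power_mono)
  moreover have "(norm (y - c))\<^sup>2 = (norm (z - c))\<^sup>2 - 2 * inner (z - y) (z - c) + (infdist z K)\<^sup>2"
    using dot_norm[of "z - c" "y - z"] assms(3)
    by (simp add: ThetaK_eq dist_norm norm_minus_commute inner_commute inner_diff_right)
  ultimately show ?thesis using infdist_sq_eq[OF assms(1,2), of z] by (simp add: c_def)
qed

lemma infdist_gap_off_ThetaK:
  fixes K :: "'a::euclidean_space set"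
  assumes "closed K" "compact T" "T \<subseteq> K" "T \<inter> ThetaK K z = {}"
  obtains \<eta> where "0 < \<eta>" "\<eta> \<le> 1" "\<And>y. y \<in> T \<Longrightarrow> infdist z K + \<eta> \<le> dist z y"
proof (cases "T = {}")
  case True
  then show ?thesis using that[of 1] by auto
next
  case False
  obtain y0 where y0: "y0 \<in> T" "\<And>y. y \<in> T \<Longrightarrow> dist z y0 \<le> dist z y"
    using continuous_attains_inf[OF assms(2) False continuous_on_dist[OF continuous_on_const continuous_on_id]]
    by blast
  have "infdist z K \<le> dist z y0" using y0(1) assms(3) by (intro infdist_le) auto
  moreover have "dist z y0 \<noteq> infdist z K" using assms(3,4) y0(1) by (auto simp: ThetaK_eq)
  ultimately have "infdist z K < dist z y0" by simp
  then show ?thesis using that[of "min 1 (dist z y0 - infdist z K)"] y0(2) by force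
qed

lemma sq_dist_shift_ge_far:
  fixes z y v :: "'a::real_normed_vector"
  assumes "0 \<le> R" "0 < \<eta>" "R + \<eta> \<le> dist z y" "0 \<le> e"
    "e * norm v \<le> \<eta> / 2" "2 * e * \<bar>m\<bar> \<le> \<eta>\<^sup>2 / 4"
  shows "R\<^sup>2 + 2 * e * m \<le> (dist (z + e *\<^sub>R v) y)\<^sup>2"
proof -
  have "dist z y \<le> dist z (z + e *\<^sub>R v) + dist (z + e *\<^sub>R v) y" by (rule dist_triangle)
  moreover have "dist z (z + e *\<^sub>R v) = e * norm v" using assms(4) by (simp add: dist_norm)
  ultimately have "R + \<eta> / 2 \<le> dist (z + e *\<^sub>R v) y" using assms(3,5) by linarith
  then have "(R + \<eta> / 2)\<^sup>2 \<le> (dist (z + e *\<^sub>R v) y)\<^sup>2" using assms(1,2) by (intro power_mono) auto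
  moreover have "(R + \<eta> / 2)\<^sup>2 = R\<^sup>2 + R * \<eta> + \<eta>\<^sup>2 / 4" by (simp add: power2_eq_square field_simps)
  moreover have "0 \<le> R * \<eta>" using assms(1,2) by simp
  moreover have "2 * e * m \<le> 2 * e * \<bar>m\<bar>" using assms(4) by (simp add: mult_left_mono)
  ultimately show ?thesis using assms(6) by linarith
qed

text \<open>Points of \<open>K\<close> violating the angle condition are at distance at least
  \<open>infdist z K + \<eta>\<close> from \<open>z\<close>, so for small \<open>e\<close> they cannot be nearest points of \<open>z + e v\<close>.\<close>

lemma infdist_sq_growth_direction:
  fixes K :: "'a::euclidean_space set"
  assumes "closed K" "K \<noteq> {}" "\<And>y. y \<in> ThetaK K z \<Longrightarrow> m < inner (z - y) v"
  obtains \<rho>0 where "0 < \<rho>0"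
    "\<And>e. 0 < e \<Longrightarrow> e \<le> \<rho>0 \<Longrightarrow> (infdist z K)\<^sup>2 + 2 * e * m \<le> (infdist (z + e *\<^sub>R v) K)\<^sup>2"
proof -
  define R where "R = infdist z K"
  have R0: "0 \<le> R" by (simp add: R_def infdist_nonneg)
  define T where "T = K \<inter> cball z (R + 1) \<inter> {y. inner (z - y) v \<le> m}"
  have "closed {y. inner (z - y) v \<le> m}" by (auto intro!: closed_Collect_le continuous_intros)
  then have "compact T" unfolding T_def using assms(1)
    by (intro closed_Int_compact compact_Int_closed) auto
  moreover have "T \<inter> ThetaK K z = {}" using assms(3) by (force simp: T_def)
  ultimately obtain \<eta> where eta: "0 < \<eta>" "\<eta> \<le> 1" "\<And>y. y \<in> T \<Longrightarrow> R + \<eta> \<le> dist z y"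
    using infdist_gap_off_ThetaK[OF assms(1)] unfolding R_def by (metis Int_lower1 T_def le_infE)
  have far: "R + \<eta> \<le> dist z y" if "y \<in> K" "inner (z - y) v \<le> m" for y
    using eta(3)[of y] eta(2) that by (cases "dist z y \<le> R + 1") (auto simp: T_def)
  define \<rho>0 where "\<rho>0 = min (\<eta> / (2 * (norm v + 1))) (\<eta>\<^sup>2 / (8 * (\<bar>m\<bar> + 1)))"
  have "0 < \<rho>0" unfolding \<rho>0_def using eta(1) by (auto intro!: divide_pos_pos add_nonneg_pos)
  moreover have "R\<^sup>2 + 2 * e * m \<le> (infdist (z + e *\<^sub>R v) K)\<^sup>2" if e: "0 < e" "e \<le> \<rho>0" for e
  proof -
    have "e * (2 * (norm v + 1)) \<le> \<eta>" "e * (8 * (\<bar>m\<bar> + 1)) \<le> \<eta>\<^sup>2"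
      using e(2) by (simp_all add: \<rho>0_def pos_le_divide_eq add_nonneg_pos)
    moreover have "e * norm v \<le> e * (norm v + 1)" "e * \<bar>m\<bar> \<le> e * (\<bar>m\<bar> + 1)" using e(1) by simp_all
    ultimately have e1: "e * norm v \<le> \<eta> / 2" and e2: "2 * e * \<bar>m\<bar> \<le> \<eta>\<^sup>2 / 4" by linarith+
    have key: "R\<^sup>2 + 2 * e * m \<le> (dist (z + e *\<^sub>R v) y)\<^sup>2" if yK: "y \<in> K" for y
    proof (cases "inner (z - y) v \<le> m")
      case True
      then show ?thesis using sq_dist_shift_ge_far[OF R0 eta(1) far[OF yK True] _ e1 e2] e(1) by simp
    next
      case False
      have "R\<^sup>2 \<le> (dist z y)\<^sup>2" using yK R0 by (intro power_mono) (auto simp: R_def infdist_le)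
      moreover have "(dist (z + e *\<^sub>R v) y)\<^sup>2 = (dist z y)\<^sup>2 + 2 * e * inner (z - y) v + e\<^sup>2 * (norm v)\<^sup>2"
        using dot_norm[of "z - y" "e *\<^sub>R v"]
        by (simp add: dist_norm algebra_simps power_mult_distrib)
      moreover have "2 * e * m \<le> 2 * e * inner (z - y) v" using False e(1) by simp
      ultimately show ?thesis by (smt (verit) zero_le_power2 mult_nonneg_nonneg)
    qed
    obtain y0 where "y0 \<in> K" "infdist (z + e *\<^sub>R v) K = dist (z + e *\<^sub>R v) y0"
      using infdist_attains_inf[OF assms(1,2)] by blast
    then show ?thesis using key by simp
  qed
  ultimately show ?thesis using that unfolding R_def by blast
qed

lemma FK_upper_semicontinuous:
  fixes S :: "'a::euclidean_space set"
  assumes "closed S" "S \<noteq> {}" "0 < \<epsilon>"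
  obtains \<delta> where "0 < \<delta>" "\<And>z'. dist z' z < \<delta> \<Longrightarrow> FK S z' \<le> FK S z + \<epsilon>"
proof -
  define R where "R = infdist z S"
  define \<Theta> where "\<Theta> = ThetaK S z"
  have Tc: "compact \<Theta>" and Tne: "\<Theta> \<noteq> {}"
    using compact_ThetaK[OF assms(1)] ThetaK_nonempty[OF assms(1,2)] by (auto simp: \<Theta>_def)
  define T where "T = S \<inter> cball z (R + 1) \<inter> {y. \<epsilon> \<le> infdist y \<Theta>}"
  have "closed {y. \<epsilon> \<le> infdist y \<Theta>}" by (auto intro!: closed_Collect_le continuous_intros)
  then have "compact T" unfolding T_def using assms(1)
    by (intro closed_Int_compact compact_Int_closed) auto
  moreover have "T \<inter> ThetaK S z = {}" using assms(3) by (auto simp: T_def \<Theta>_def)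
  ultimately obtain \<eta> where eta: "0 < \<eta>" "\<eta> \<le> 1" "\<And>y. y \<in> T \<Longrightarrow> R + \<eta> \<le> dist z y"
    using infdist_gap_off_ThetaK[OF assms(1)] unfolding R_def by (metis Int_lower1 T_def le_infE)
  have "FK S z' \<le> FK S z + \<epsilon>" if dz: "dist z' z < \<eta> / 2" for z'
  proof -
    have "ThetaK S z' \<subseteq> cball (enc_center \<Theta>) (FK S z + \<epsilon>)"
    proof
      fix y' assume y': "y' \<in> ThetaK S z'"
      then have y'S: "y' \<in> S" and dy': "dist z' y' = infdist z' S" by (auto simp: ThetaK_eq)
      have "infdist z' S \<le> infdist z S + dist z' z" by (rule infdist_triangle)
      then have "dist z y' < R + \<eta>"
        using dist_triangle[of z y' z'] dz dy' by (simp add: R_def dist_commute)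
      then have "infdist y' \<Theta> < \<epsilon>" using eta(3)[of y'] eta(2) y'S by (force simp: T_def)
      then obtain y where y: "y \<in> \<Theta>" "dist y' y < \<epsilon>"
        using infdist_attains_inf[OF compact_imp_closed[OF Tc] Tne, of y'] by (metis)
      have "dist (enc_center \<Theta>) y \<le> FK S z"
        using ThetaK_subset_cball[OF assms(1,2), of z] y(1) by (auto simp: \<Theta>_def)
      then show "y' \<in> cball (enc_center \<Theta>) (FK S z + \<epsilon>)"
        using dist_triangle[of "enc_center \<Theta>" y' y] y(2) by (simp add: dist_commute)
    qed
    then show ?thesis
      unfolding FK_def[of S z'] by (rule enc_radius_le[OF ThetaK_nonempty[OF assms(1,2)]])
  qed
  then show ?thesis using that[of "\<eta> / 2"] eta(1) by auto
qed

lemma usc_attains_sup: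
  fixes f :: "'a::metric_space \<Rightarrow> real"
  assumes "compact X" "X \<noteq> {}"
    and usc: "\<And>z e. z \<in> X \<Longrightarrow> 0 < e \<Longrightarrow> \<exists>d>0. \<forall>z'\<in>X. dist z' z < d \<longrightarrow> f z' < f z + e"
  shows "\<exists>z\<in>X. \<forall>z'\<in>X. f z' \<le> f z"
proof (rule ccontr)
  assume "\<not> ?thesis"
  then have "\<forall>z\<in>X. \<exists>z''\<in>X. f z < f z''" by (auto simp: not_le)
  then obtain g where g: "\<And>z. z \<in> X \<Longrightarrow> g z \<in> X \<and> f z < f (g z)" by metis
  have "\<forall>z\<in>X. \<exists>d>0. \<forall>z'\<in>X. dist z' z < d \<longrightarrow> f z' < f (g z)"
  proof
    fix z assume zX: "z \<in> X"
    from usc[OF zX, of "f (g z) - f z"] g[OF zX] show "\<exists>d>0. \<forall>z'\<in>X. dist z' z < d \<longrightarrow> f z' < f (g z)"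
      by auto
  qed
  then obtain d where d: "\<And>z. z \<in> X \<Longrightarrow> 0 < d z \<and> (\<forall>z'\<in>X. dist z' z < d z \<longrightarrow> f z' < f (g z))"
    by metis
  have "X \<subseteq> (\<Union>z\<in>X. ball z (d z))" using d by force
  then obtain C where C: "C \<subseteq> X" "finite C" "X \<subseteq> (\<Union>z\<in>C. ball z (d z))"
    using compactE_image[OF assms(1)] by (metis open_ball)
  have "C \<noteq> {}" using C(3) assms(2) by auto
  then have "Max ((\<lambda>z. f (g z)) ` C) \<in> (\<lambda>z. f (g z)) ` C" using C(2) by (intro Max_in) auto
  then obtain w0 where w0: "w0 \<in> C" "Max ((\<lambda>z. f (g z)) ` C) = f (g w0)" by auto
  have "g w0 \<in> X" using g C(1) w0(1) by blast
  then obtain w where "w \<in> C" "g w0 \<in> ball w (d w)" using C(3) by blast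
  then have "f (g w0) < f (g w)" using d[of w] C(1) \<open>g w0 \<in> X\<close> by (auto simp: dist_commute)
  moreover have "f (g w) \<le> Max ((\<lambda>z. f (g z)) ` C)" using C(2) \<open>w \<in> C\<close> by (intro Max_ge) auto
  ultimately show False using w0(2) by simp
qed

section \<open>Offsets\<close>

lemma closed_offset: "closed (offset K a)"
  unfolding offset_def by (auto intro!: closed_Collect_le continuous_intros)

lemma subset_offset: "0 \<le> a \<Longrightarrow> K \<subseteq> offset K a"
  unfolding offset_def by auto

lemma FK_eq_0:
  fixes S :: "'a::euclidean_space set"
  assumes "x \<in> S"
  shows "FK S x = 0"
proof -
  have "ThetaK S x = {x}" using assms by (auto simp: ThetaK_eq)
  then show ?thesis by (simp add: FK_def enc_radius_singleton)
qed

lemma nearest_offset_point_homothetic: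
  fixes K :: "'a::euclidean_space set"
  assumes "closed K" "K \<noteq> {}" "0 < \<alpha>" "\<alpha> < infdist z K"
    and y: "infdist y K \<le> \<alpha>" "dist z y = infdist z K - \<alpha>"
  shows "\<exists>k\<in>ThetaK K z. y = z + ((infdist z K - \<alpha>) / infdist z K) *\<^sub>R (k - z)"
proof -
  define R where "R = infdist z K"
  have "0 < R" using assms(3,4) by (simp add: R_def)
  obtain k where kK: "k \<in> K" and dk: "infdist y K = dist y k"
    using infdist_attains_inf[OF assms(1,2)] by blast
  have "R \<le> dist z k" using infdist_le[OF kK] by (simp add: R_def)
  moreover have "dist z k \<le> dist z y + dist y k" by (rule dist_triangle)
  ultimately have dzk: "dist z k = R" and dyk: "dist y k = \<alpha>" using y dk by (simp_all add: R_def)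
  then have "norm (z - y) *\<^sub>R (y - k) = norm (y - k) *\<^sub>R (z - y)"
    using y(2) by (simp add: R_def dist_triangle_eq[symmetric])
  then have "(R - \<alpha>) *\<^sub>R (y - k) = \<alpha> *\<^sub>R (z - y)" using y(2) dyk by (simp add: R_def dist_norm)
  then have y_eq: "R *\<^sub>R y = \<alpha> *\<^sub>R z + (R - \<alpha>) *\<^sub>R k" by (simp add: algebra_simps)
  define s where "s = (R - \<alpha>) / R"
  have "R *\<^sub>R (z + s *\<^sub>R (k - z)) = R *\<^sub>R z + (R * s) *\<^sub>R (k - z)" by (simp add: scaleR_add_right)
  also have "R * s = R - \<alpha>" using \<open>0 < R\<close> by (simp add: s_def)
  also have "R *\<^sub>R z + (R - \<alpha>) *\<^sub>R (k - z) = R *\<^sub>R y" using y_eq by (simp add: algebra_simps)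
  finally have "y = z + s *\<^sub>R (k - z)" using \<open>0 < R\<close> by simp
  moreover have "k \<in> ThetaK K z" using kK dzk by (simp add: ThetaK_eq R_def)
  ultimately show ?thesis by (auto simp: R_def s_def)
qed

lemma homothety_ThetaK_in_offset:
  fixes K :: "'a::euclidean_space set"
  assumes "0 < \<alpha>" "\<alpha> < infdist z K" "k \<in> ThetaK K z"
  defines "y \<equiv> z + ((infdist z K - \<alpha>) / infdist z K) *\<^sub>R (k - z)"
  shows "y \<in> offset K \<alpha>" and "dist z y = infdist z K - \<alpha>"
proof -
  define R where "R = infdist z K"
  define s where "s = (R - \<alpha>) / R"
  have "0 < R" using assms(1,2) by (simp add: R_def)
  have kK: "k \<in> K" and dk: "dist z k = R" using assms(3) by (auto simp: ThetaK_eq R_def)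
  have "z - y = s *\<^sub>R (z - k)" "y - k = (1 - s) *\<^sub>R (z - k)" by (simp_all add: y_def s_def R_def algebra_simps)
  moreover have "0 < s" "1 - s = \<alpha> / R" using assms(1,2) \<open>0 < R\<close> by (simp_all add: s_def R_def field_simps)
  ultimately have "dist z y = s * R" "dist y k = \<alpha>"
    using dk \<open>0 < R\<close> assms(1) by (simp_all add: dist_norm dist_commute)
  then show "dist z y = infdist z K - \<alpha>" "y \<in> offset K \<alpha>"
    using infdist_le[OF kK, of y] \<open>0 < R\<close> by (simp_all add: offset_def s_def R_def)
qed

lemma ThetaK_offset:
  fixes K :: "'a::euclidean_space set"
  assumes "closed K" "K \<noteq> {}" "0 < \<alpha>" "\<alpha> < infdist z K"
  defines "s \<equiv> (infdist z K - \<alpha>) / infdist z K"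
  shows "infdist z (offset K \<alpha>) = infdist z K - \<alpha>"
    and "ThetaK (offset K \<alpha>) z = (\<lambda>k. z + s *\<^sub>R (k - z)) ` ThetaK K z"
proof -
  define L where "L = offset K \<alpha>"
  define h where "h = (\<lambda>k::'a. z + s *\<^sub>R (k - z))"
  have hK: "h k \<in> L" "dist z (h k) = infdist z K - \<alpha>" if "k \<in> ThetaK K z" for k
    using homothety_ThetaK_in_offset[OF assms(3,4) that] by (simp_all add: h_def s_def L_def)
  obtain k0 where "k0 \<in> ThetaK K z" using ThetaK_nonempty[OF assms(1,2)] by blast
  have "L \<noteq> {}" using subset_offset[of \<alpha> K] assms(2,3) by (auto simp: L_def)
  then obtain y where "y \<in> L" "infdist z L = dist z y"
    using infdist_attains_inf[OF closed_offset] unfolding L_def by metis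
  moreover have "infdist z K - \<alpha> \<le> dist z y" if "y \<in> L" for y
    using infdist_triangle[of z K y] that by (simp add: L_def offset_def)
  ultimately have iL: "infdist z L = infdist z K - \<alpha>"
    using hK[OF \<open>k0 \<in> ThetaK K z\<close>] infdist_le[of "h k0" L z] by force
  then show "infdist z (offset K \<alpha>) = infdist z K - \<alpha>" by (simp add: L_def)
  have "ThetaK L z \<subseteq> h ` ThetaK K z"
  proof
    fix y assume "y \<in> ThetaK L z"
    then have "infdist y K \<le> \<alpha>" "dist z y = infdist z K - \<alpha>"
      using iL by (auto simp: ThetaK_eq L_def offset_def)
    then show "y \<in> h ` ThetaK K z"
      using nearest_offset_point_homothetic[OF assms(1-4)] by (auto simp: h_def s_def)
  qed
  moreover have "h ` ThetaK K z \<subseteq> ThetaK L z" using hK iL by (auto simp: ThetaK_eq)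
  ultimately show "ThetaK (offset K \<alpha>) z = (\<lambda>k. z + s *\<^sub>R (k - z)) ` ThetaK K z"
    by (simp add: L_def h_def)
qed

lemma FK_offset:
  fixes K :: "'a::euclidean_space set"
  assumes "closed K" "K \<noteq> {}" "0 < \<alpha>" "\<alpha> < infdist z K"
  shows "FK (offset K \<alpha>) z = (infdist z K - \<alpha>) / infdist z K * FK K z"
  unfolding FK_def ThetaK_offset(2)[OF assms]
  using assms by (intro enc_radius_homothety compact_imp_bounded compact_ThetaK ThetaK_nonempty) auto

lemma FK_offset_less:
  fixes K :: "'a::euclidean_space set"
  assumes "closed K" "K \<noteq> {}" "0 < \<alpha>" "\<alpha> < infdist z K" "0 < FK (offset K \<alpha>) z"
  shows "FK (offset K \<alpha>) z < FK K z"
proof -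
  have "0 < infdist z K" using assms(3,4) by simp
  have Fs: "FK (offset K \<alpha>) z = FK K z - \<alpha> * FK K z / infdist z K"
    using FK_offset[OF assms(1-4)] \<open>0 < infdist z K\<close> by (simp add: field_simps)
  then have "FK K z \<noteq> 0" using assms(5) by auto
  then have "0 < FK K z" using FK_nonneg[OF assms(1,2), of z] by simp
  then show ?thesis using Fs \<open>0 < infdist z K\<close> assms(3) by simp
qed

section \<open>Maximising the distance function on a ball\<close>

lemma closed_convex_ray:
  fixes w d :: "'a::euclidean_space"
  shows "closed {w - s *\<^sub>R d | s. 0 \<le> s}" "convex {w - s *\<^sub>R d | s. 0 \<le> s}"
proof -
  have lin: "linear (\<lambda>s::real. s *\<^sub>R (- d))" by (rule linear_scaleR_left)
  have eq: "{w - s *\<^sub>R d | s. 0 \<le> s} = (+) w ` ((\<lambda>s. s *\<^sub>R (- d)) ` {0..})"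
    by (auto simp: image_iff)
  show "convex {w - s *\<^sub>R d | s. 0 \<le> s}"
    unfolding eq by (intro convex_translation convex_linear_image[OF lin]) simp
  show "closed {w - s *\<^sub>R d | s. 0 \<le> s}"
  proof (cases "d = 0")
    case True
    then have "{w - s *\<^sub>R d | s. 0 \<le> s} = {w}" by auto
    then show ?thesis by simp
  next
    case False
    then have "inj (\<lambda>s::real. s *\<^sub>R (- d))" by (auto simp: inj_on_def)
    then show ?thesis
      unfolding eq by (intro closed_translation closed_injective_linear_image[OF closed_atLeast lin])
  qed
qed

text \<open>If the ray from \<open>w\<close> in direction \<open>-d\<close> misses \<open>P\<close>, a separating direction \<open>-a\<close> can be tilted
  slightly towards \<open>-d\<close> so that it still points away from \<open>P\<close>.\<close>

lemma ray_avoiding_separating_direction: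
  fixes w d :: "'a::euclidean_space"
  assumes "compact P" "convex P" "P \<noteq> {}" "\<And>s. 0 \<le> s \<Longrightarrow> w - s *\<^sub>R d \<notin> P"
  obtains v m \<delta> where "0 < m" "0 < \<delta>" "\<And>y. y \<in> P \<Longrightarrow> m < inner (w - y) v"
    "inner d v \<le> - \<delta> * (norm d)\<^sup>2"
proof -
  define Ray where "Ray = {w - s *\<^sub>R d | s. 0 \<le> s}"
  have "Ray \<inter> P = {}" using assms(4) unfolding Ray_def by blast
  then obtain a b where ab: "\<forall>x\<in>Ray. inner a x < b" "\<forall>x\<in>P. b < inner a x"
    using separating_hyperplane_closed_compact[OF closed_convex_ray(2) closed_convex_ray(1) assms(2,1,3)]
    unfolding Ray_def by blast
  have ray: "inner a (w - s *\<^sub>R d) < b" if "0 \<le> s" for s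
    using ab(1) that unfolding Ray_def by blast
  define \<beta> where "\<beta> = b - inner a w"
  have "0 < \<beta>" using ray[of 0] by (simp add: \<beta>_def)
  have ad: "0 \<le> inner a d"
  proof (rule ccontr)
    assume neg: "\<not> 0 \<le> inner a d"
    define s where "s = \<beta> / - inner a d"
    have "0 \<le> s" using neg \<open>0 < \<beta>\<close> by (simp add: s_def less_imp_le divide_pos_neg)
    moreover have "inner a (w - s *\<^sub>R d) = b"
      using neg by (simp add: s_def \<beta>_def inner_diff_right inner_add_right)
    ultimately show False using ray by fastforce
  qed
  obtain B where B: "\<And>y. y \<in> P \<Longrightarrow> norm (w - y) \<le> B"
    using bounded_any_center[of P w] compact_imp_bounded[OF assms(1)] by (auto simp: dist_norm)
  have "0 \<le> B" using assms(3) B by (meson all_not_in_conv norm_ge_zero order_trans)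
  define \<delta> where "\<delta> = \<beta> / (2 * (B * norm d + 1))"
  have pos: "0 < B * norm d + 1" using \<open>0 \<le> B\<close> by (simp add: add_nonneg_pos)
  have "0 < \<delta>" using \<open>0 < \<beta>\<close> pos by (simp add: \<delta>_def)
  have \<delta>B: "\<delta> * (B * norm d) \<le> \<beta> / 2"
  proof -
    have "\<delta> * (2 * (B * norm d + 1)) = \<beta>" using pos by (simp add: \<delta>_def)
    moreover have "\<delta> * (B * norm d) \<le> \<delta> * (B * norm d + 1)" using \<open>0 < \<delta>\<close> by simp
    ultimately show ?thesis by linarith
  qed
  define v where "v = - a - \<delta> *\<^sub>R d"
  have "\<beta> / 2 < inner (w - y) v" if "y \<in> P" for y
  proof -
    have "b < inner a y" using ab(2) that by blast
    then have "\<beta> < inner (w - y) (- a)"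
      using inner_commute[of a w] inner_commute[of a y] by (simp add: \<beta>_def inner_diff_left)
    moreover have "inner (w - y) d \<le> B * norm d"
      using norm_cauchy_schwarz[of "w - y" d] mult_right_mono[OF B[OF that] norm_ge_zero[of d]] by linarith
    then have "\<delta> * inner (w - y) d \<le> \<delta> * (B * norm d)" using \<open>0 < \<delta>\<close> by (simp add: mult_left_mono)
    then have "\<delta> * inner (w - y) d \<le> \<beta> / 2" using \<delta>B by linarith
    ultimately show ?thesis by (simp add: v_def inner_diff_right)
  qed
  moreover have "inner d v \<le> - \<delta> * (norm d)\<^sup>2"
    using ad by (simp add: v_def inner_diff_right inner_commute power2_norm_eq_inner)
  ultimately show ?thesis using that[of "\<beta> / 2" \<delta> v] \<open>0 < \<beta>\<close> \<open>0 < \<delta>\<close> by auto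
qed

lemma small_step_in_cball:
  fixes d v :: "'a::real_inner"
  assumes "0 < \<rho>" "norm d \<le> \<rho>" "0 < \<delta>" "inner d v \<le> - \<delta> * (norm d)\<^sup>2"
  obtains e0 where "0 < e0" "\<And>e. 0 < e \<Longrightarrow> e \<le> e0 \<Longrightarrow> norm (d + e *\<^sub>R v) \<le> \<rho>"
proof -
  define e0 where "e0 = min (\<delta> * \<rho>\<^sup>2 / ((norm v)\<^sup>2 + 1)) (\<rho> / (2 * (norm v + 1)))"
  have "0 < e0" unfolding e0_def using assms(1,3) by (auto intro!: divide_pos_pos add_nonneg_pos)
  moreover have "norm (d + e *\<^sub>R v) \<le> \<rho>" if e: "0 < e" "e \<le> e0" for e
  proof -
    have "e * ((norm v)\<^sup>2 + 1) \<le> \<delta> * \<rho>\<^sup>2" "e * (2 * (norm v + 1)) \<le> \<rho>"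
      using e(2) by (simp_all add: e0_def pos_le_divide_eq add_nonneg_pos)
    moreover have "e * (norm v)\<^sup>2 \<le> e * ((norm v)\<^sup>2 + 1)" "e * norm v \<le> e * (norm v + 1)"
      using e(1) by simp_all
    ultimately have e1: "e * (norm v)\<^sup>2 \<le> \<delta> * \<rho>\<^sup>2" and e2: "e * norm v \<le> \<rho> / 2" by linarith+
    have "(norm (d + e *\<^sub>R v))\<^sup>2 = (norm d)\<^sup>2 + 2 * e * inner d v + e\<^sup>2 * (norm v)\<^sup>2"
      using dot_norm[of d "e *\<^sub>R v"] by (simp add: power_mult_distrib)
    also have "\<dots> \<le> \<rho>\<^sup>2"
    proof (cases "\<rho>\<^sup>2 \<le> 2 * (norm d)\<^sup>2")
      case True
      have "2 * e * inner d v \<le> 2 * e * (- \<delta> * (norm d)\<^sup>2)"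
        using assms(4) e(1) by (intro mult_left_mono) auto
      also have "\<dots> = - (e * \<delta>) * (2 * (norm d)\<^sup>2)" by (simp add: algebra_simps)
      also have "\<dots> \<le> - (e * \<delta>) * \<rho>\<^sup>2"
        using True e(1) assms(3) by (intro mult_left_mono_neg) auto
      finally have "2 * e * inner d v \<le> - (e * \<delta>) * \<rho>\<^sup>2" .
      moreover have "e\<^sup>2 * (norm v)\<^sup>2 \<le> e * (\<delta> * \<rho>\<^sup>2)"
        using mult_left_mono[OF e1, of e] e(1) by (simp add: power2_eq_square mult.assoc)
      moreover have "(norm d)\<^sup>2 \<le> \<rho>\<^sup>2" using assms(2) by (simp add: power_mono)
      ultimately show ?thesis by (simp add: algebra_simps)
    next
      case False
      have "0 \<le> \<delta> * (norm d)\<^sup>2" using assms(3) by simp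
      then have "2 * e * inner d v \<le> 0"
        using assms(4) e(1) by (simp add: mult_nonneg_nonpos)
      moreover have "(e * norm v)\<^sup>2 \<le> (\<rho> / 2)\<^sup>2" using e(1) e2 by (intro power_mono) auto
      then have "e\<^sup>2 * (norm v)\<^sup>2 \<le> \<rho>\<^sup>2 / 4" by (simp add: power_mult_distrib power_divide)
      ultimately show ?thesis using False zero_le_power2[of \<rho>] by linarith
    qed
    finally show ?thesis by (rule power2_le_imp_le) (use assms(1) in simp)
  qed
  ultimately show ?thesis using that by blast
qed

text \<open>Lagrange condition for a maximiser of the distance over a ball: otherwise a direction
  pointing away from all nearest points and into the ball would increase the distance.\<close>

lemma ball_maximizer_hull_ThetaK_ray:
  fixes K :: "'a::euclidean_space set"
  assumes "closed K" "K \<noteq> {}" "0 < \<rho>" "w \<in> cball z \<rho>"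
    and wmax: "\<And>w'. w' \<in> cball z \<rho> \<Longrightarrow> infdist w' K \<le> infdist w K"
  obtains yh s where "yh \<in> convex hull ThetaK K w" "0 \<le> s" "w - yh = s *\<^sub>R (w - z)"
proof (rule ccontr)
  note ray_point = that
  assume "\<not> thesis"
  have miss: "w - s *\<^sub>R (w - z) \<notin> convex hull ThetaK K w" if "0 \<le> s" for s
    using ray_point[of "w - s *\<^sub>R (w - z)" s] \<open>\<not> thesis\<close> that by auto
  have "convex hull ThetaK K w \<noteq> {}" using ThetaK_nonempty[OF assms(1,2)] by simp
  then obtain v m \<delta> where v: "0 < m" "0 < \<delta>" "\<And>y. y \<in> convex hull ThetaK K w \<Longrightarrow> m < inner (w - y) v"
    "inner (w - z) v \<le> - \<delta> * (norm (w - z))\<^sup>2"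
    using ray_avoiding_separating_direction[OF compact_convex_hull[OF compact_ThetaK[OF assms(1)]]
        convex_convex_hull _ miss] by blast
  have "m < inner (w - y) v" if "y \<in> ThetaK K w" for y using v(3)[OF hull_inc[OF that]] .
  then obtain \<rho>0 where \<rho>0: "0 < \<rho>0"
    "\<And>e. 0 < e \<Longrightarrow> e \<le> \<rho>0 \<Longrightarrow> (infdist w K)\<^sup>2 + 2 * e * m \<le> (infdist (w + e *\<^sub>R v) K)\<^sup>2"
    using infdist_sq_growth_direction[OF assms(1,2)] by blast
  have "norm (w - z) \<le> \<rho>" using assms(4) by (simp add: dist_norm norm_minus_commute)
  then obtain e0 where e0: "0 < e0" "\<And>e. 0 < e \<Longrightarrow> e \<le> e0 \<Longrightarrow> norm (w - z + e *\<^sub>R v) \<le> \<rho>"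
    using small_step_in_cball[OF assms(3) _ v(2,4)] by blast
  define e where "e = min \<rho>0 e0"
  have "0 < e" "e \<le> \<rho>0" "e \<le> e0" using \<rho>0(1) e0(1) by (simp_all add: e_def)
  have "w + e *\<^sub>R v \<in> cball z \<rho>"
    using e0(2)[OF \<open>0 < e\<close> \<open>e \<le> e0\<close>] by (simp add: dist_norm norm_minus_commute[of z] diff_add_eq)
  then have "infdist (w + e *\<^sub>R v) K \<le> infdist w K" by (rule wmax)
  then have "(infdist (w + e *\<^sub>R v) K)\<^sup>2 \<le> (infdist w K)\<^sup>2" by (simp add: power_mono infdist_nonneg)
  moreover have "(infdist w K)\<^sup>2 + 2 * e * m \<le> (infdist (w + e *\<^sub>R v) K)\<^sup>2"
    using \<rho>0(2)[OF \<open>0 < e\<close> \<open>e \<le> \<rho>0\<close>] .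
  moreover have "0 < 2 * e * m" using \<open>0 < e\<close> v(1) by simp
  ultimately show False by linarith
qed

lemma convex_hull_ThetaK_sq_bounds:
  fixes K :: "'a::euclidean_space set"
  assumes "closed K" "K \<noteq> {}" "yh \<in> convex hull ThetaK K w"
  shows "(infdist z K)\<^sup>2 + (norm (yh - w))\<^sup>2 \<le> (infdist w K)\<^sup>2 + (norm (yh - z))\<^sup>2"
    and "(infdist w K)\<^sup>2 - (norm (yh - w))\<^sup>2 \<le> (FK K w)\<^sup>2"
proof -
  obtain Y u where Y: "finite Y" "Y \<subseteq> ThetaK K w" "\<And>y. y \<in> Y \<Longrightarrow> 0 \<le> u y" "sum u Y = 1"
    "(\<Sum>y\<in>Y. u y *\<^sub>R y) = yh"
    using assms(3) unfolding convex_hull_explicit by blast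
  define V where "V = (\<Sum>y\<in>Y. u y * (norm (y - yh))\<^sup>2)"
  have "(\<Sum>y\<in>Y. u y * (norm (y - w))\<^sup>2) = (\<Sum>y\<in>Y. u y * (infdist w K)\<^sup>2)"
    using Y(2) by (intro sum.cong) (auto simp: ThetaK_eq dist_norm norm_minus_commute)
  then have Vw: "V + (norm (yh - w))\<^sup>2 = (infdist w K)\<^sup>2"
    using barycenter_sum_sq_dist[OF Y(1,4) Y(5)[symmetric], of w] Y(4)
    by (simp add: V_def sum_distrib_right[symmetric])
  have "(infdist z K)\<^sup>2 \<le> (\<Sum>y\<in>Y. u y * (norm (y - z))\<^sup>2)"
  proof (rule weighted_avg_ge[OF _ Y(3,4)])
    fix y assume "y \<in> Y"
    then have "infdist z K \<le> norm (y - z)"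
      using Y(2) infdist_le[of y K z] by (auto simp: ThetaK_eq dist_norm norm_minus_commute)
    then show "(infdist z K)\<^sup>2 \<le> (norm (y - z))\<^sup>2" by (rule power_mono[OF _ infdist_nonneg])
  qed
  also have "\<dots> = V + (norm (yh - z))\<^sup>2"
    unfolding V_def by (rule barycenter_sum_sq_dist[OF Y(1,4) Y(5)[symmetric]])
  finally show "(infdist z K)\<^sup>2 + (norm (yh - w))\<^sup>2 \<le> (infdist w K)\<^sup>2 + (norm (yh - z))\<^sup>2"
    using Vw by simp
  have "V \<le> (FK K w)\<^sup>2"
    unfolding V_def FK_def
    by (rule weighted_sum_sq_dist_le_enc_radius[OF compact_imp_bounded[OF compact_ThetaK[OF assms(1)]]
          Y(1,2,3,4) Y(5)[symmetric]])
  then show "(infdist w K)\<^sup>2 - (norm (yh - w))\<^sup>2 \<le> (FK K w)\<^sup>2" using Vw by simp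
qed

lemma sq_le_of_quadratic_bounds:
  fixes a q r g :: real
  assumes "2 * q * r \<le> a + r\<^sup>2" "a \<le> 2 * g * r + r\<^sup>2" "0 \<le> a" "r \<le> 2 * g" "0 \<le> q" "0 < r"
  shows "q\<^sup>2 \<le> a + g\<^sup>2"
proof -
  have "(2 * q * r)\<^sup>2 \<le> (a + r\<^sup>2)\<^sup>2"
    using assms(1,5,6) by (intro power_mono) auto
  moreover have "(a + r\<^sup>2)\<^sup>2 - 4 * r\<^sup>2 * (a + g\<^sup>2) = (a - r\<^sup>2 - 2 * r * g) * (a - r\<^sup>2 + 2 * r * g)"
    by (simp add: power2_eq_square algebra_simps)
  moreover have "r\<^sup>2 \<le> 2 * r * g" using assms(4,6) by (simp add: power2_eq_square mult_left_mono)
  then have "(a - r\<^sup>2 - 2 * r * g) * (a - r\<^sup>2 + 2 * r * g) \<le> 0"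
    using assms(2,3) by (intro mult_nonpos_nonneg) (auto simp: algebra_simps)
  ultimately have "4 * r\<^sup>2 * q\<^sup>2 \<le> 4 * r\<^sup>2 * (a + g\<^sup>2)"
    by (simp add: power_mult_distrib power2_eq_square algebra_simps)
  then show ?thesis using assms(6) by simp
qed

text \<open>The Lagrange condition combined with semiconcavity bounds the Lagrange multiplier, which is
  what the quadratic inequality above encodes.\<close>

lemma FK_mono_ball_maximizer:
  fixes K :: "'a::euclidean_space set"
  assumes "closed K" "K \<noteq> {}" "0 < \<rho>" "\<rho> \<le> 2 * norm (z - enc_center (ThetaK K z))"
    "w \<in> cball z \<rho>" and wmax: "\<And>w'. w' \<in> cball z \<rho> \<Longrightarrow> infdist w' K \<le> infdist w K"
  shows "FK K z \<le> FK K w"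
proof -
  define g where "g = norm (z - enc_center (ThetaK K z))"
  define r where "r = norm (w - z)"
  obtain yh s where yh: "yh \<in> convex hull ThetaK K w" "0 \<le> s" "w - yh = s *\<^sub>R (w - z)"
    using ball_maximizer_hull_ThetaK_ray[OF assms(1,2,3,5) wmax] by blast
  have "yh - w = - s *\<^sub>R (w - z)" "yh - z = (1 - s) *\<^sub>R (w - z)"
    using yh(3) by (simp_all add: algebra_simps)
  then have nyw: "norm (yh - w) = s * r" and nyz: "(norm (yh - z))\<^sup>2 = (1 - s)\<^sup>2 * r\<^sup>2"
    using yh(2) by (simp_all add: r_def power_mult_distrib)
  have hull_bounds:
    "(infdist z K)\<^sup>2 + (s * r)\<^sup>2 \<le> (infdist w K)\<^sup>2 + (1 - s)\<^sup>2 * r\<^sup>2"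
    "(infdist w K)\<^sup>2 - (s * r)\<^sup>2 \<le> (FK K w)\<^sup>2"
    using convex_hull_ThetaK_sq_bounds(1)[OF assms(1,2) yh(1), of z]
      convex_hull_ThetaK_sq_bounds(2)[OF assms(1,2) yh(1)] nyw nyz by simp_all
  have semi: "(infdist w K)\<^sup>2 \<le> (infdist z K)\<^sup>2 + 2 * g * r + r\<^sup>2"
    using infdist_sq_semiconcave[OF assms(1,2), of w z] norm_cauchy_schwarz[of "w - z" "z - enc_center (ThetaK K z)"]
    by (simp add: r_def g_def algebra_simps)
  have mono: "(infdist z K)\<^sup>2 \<le> (infdist w K)\<^sup>2"
    using wmax[of z] assms(3) by (simp add: power_mono infdist_nonneg)
  have "(s * r)\<^sup>2 \<le> ((infdist w K)\<^sup>2 - (infdist z K)\<^sup>2) + g\<^sup>2"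
  proof (cases "r = 0")
    case True
    then show ?thesis using mono by simp
  next
    case False
    then have "0 < r" by (simp add: r_def)
    show ?thesis
    proof (rule sq_le_of_quadratic_bounds)
      show "2 * (s * r) * r \<le> (infdist w K)\<^sup>2 - (infdist z K)\<^sup>2 + r\<^sup>2"
        using hull_bounds(1) by (simp add: power2_eq_square algebra_simps)
      show "(infdist w K)\<^sup>2 - (infdist z K)\<^sup>2 \<le> 2 * g * r + r\<^sup>2" using semi by simp
      show "0 \<le> (infdist w K)\<^sup>2 - (infdist z K)\<^sup>2" using mono by simp
      show "r \<le> 2 * g" using assms(4,5) by (simp add: r_def g_def dist_norm norm_minus_commute)
      show "0 \<le> s * r" using yh(2) by (simp add: r_def)
    qed fact
  qed
  then have "(FK K z)\<^sup>2 \<le> (FK K w)\<^sup>2"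
    using hull_bounds(2) infdist_sq_eq[OF assms(1,2), of z] by (simp add: g_def)
  then show ?thesis by (rule power2_le_imp_le) (rule FK_nonneg[OF assms(1,2)])
qed

lemma infdist_ascent:
  fixes K :: "'a::euclidean_space set"
  assumes "closed K" "K \<noteq> {}" "0 < m" "m < norm (z - enc_center (ThetaK K z))"
  obtains \<rho>0 where "0 < \<rho>0" "\<And>\<rho>. 0 < \<rho> \<Longrightarrow> \<rho> \<le> \<rho>0 \<Longrightarrow>
    \<exists>w\<in>cball z \<rho>. FK K z \<le> FK K w \<and> (infdist z K)\<^sup>2 + 2 * \<rho> * m \<le> (infdist w K)\<^sup>2"
proof -
  define c where "c = enc_center (ThetaK K z)"
  define n where "n = norm (z - c)"
  have "0 < n" unfolding n_def c_def using assms(3,4) by linarith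
  define e where "e = (1 / n) *\<^sub>R (z - c)"
  have "norm e = 1" using \<open>0 < n\<close> by (simp add: e_def n_def)
  have "m < inner (z - y) e" if "y \<in> ThetaK K z" for y
  proof -
    have "n\<^sup>2 \<le> inner (z - y) (z - c)" using inner_ThetaK_ge[OF assms(1,2) that] by (simp add: c_def n_def)
    moreover have "inner (z - y) e = inner (z - y) (z - c) / n" by (simp add: e_def)
    ultimately have "n \<le> inner (z - y) e"
      using \<open>0 < n\<close> by (simp add: pos_le_divide_eq power2_eq_square)
    then show ?thesis using assms(4) by (simp add: n_def c_def)
  qed
  then obtain \<rho>1 where \<rho>1: "0 < \<rho>1"
    "\<And>t. 0 < t \<Longrightarrow> t \<le> \<rho>1 \<Longrightarrow> (infdist z K)\<^sup>2 + 2 * t * m \<le> (infdist (z + t *\<^sub>R e) K)\<^sup>2"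
    using infdist_sq_growth_direction[OF assms(1,2)] by blast
  have "\<exists>w\<in>cball z \<rho>. FK K z \<le> FK K w \<and> (infdist z K)\<^sup>2 + 2 * \<rho> * m \<le> (infdist w K)\<^sup>2"
    if \<rho>: "0 < \<rho>" "\<rho> \<le> min \<rho>1 (2 * n)" for \<rho>
  proof -
    have "continuous_on (cball z \<rho>) (\<lambda>y. infdist y K)" by (intro continuous_intros)
    then obtain w where w: "w \<in> cball z \<rho>" "\<And>w'. w' \<in> cball z \<rho> \<Longrightarrow> infdist w' K \<le> infdist w K"
      using continuous_attains_sup[of "cball z \<rho>" "\<lambda>y. infdist y K"] \<rho>(1) by auto
    have "FK K z \<le> FK K w"
      using FK_mono_ball_maximizer[OF assms(1,2) \<rho>(1) _ w] \<rho>(2) by (simp add: n_def c_def)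
    moreover have "z + \<rho> *\<^sub>R e \<in> cball z \<rho>" using \<open>norm e = 1\<close> \<rho>(1) by (simp add: dist_norm)
    then have "(infdist (z + \<rho> *\<^sub>R e) K)\<^sup>2 \<le> (infdist w K)\<^sup>2"
      using w(2) by (simp add: power_mono infdist_nonneg)
    ultimately show ?thesis using \<rho>1(2)[OF \<rho>(1)] \<rho>(2) w(1) by force
  qed
  then show ?thesis using that[of "min \<rho>1 (2 * n)"] \<rho>1(1) \<open>0 < n\<close> by simp
qed

section \<open>The critical function and the gradient bound\<close>

lemma norm_gradK: "norm (gradK K z) = norm (z - enc_center (ThetaK K z)) / infdist z K"
  by (simp add: gradK_def RK_def infdist_nonneg)

lemma chiK_le_norm_gradK: "chiK K (infdist z K) \<le> norm (gradK K z)"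
proof -
  have "{x. RK K x = infdist z K} \<noteq> {}" by (auto simp: RK_def)
  then have "chiK K (infdist z K) = Inf {norm (gradK K x) | x. RK K x = infdist z K}"
    unfolding chiK_def by (rule if_not_P)
  also have "\<dots> \<le> norm (gradK K z)"
    by (rule cInf_lower) (auto simp: RK_def intro: bdd_belowI[of _ 0])
  finally show ?thesis .
qed

lemma mu_le_chiK_below_r_mu:
  assumes "\<alpha> < t" "ereal t < r_mu \<mu> \<alpha> K"
  shows "\<mu> \<le> chiK K t"
proof (rule ccontr)
  assume "\<not> \<mu> \<le> chiK K t"
  then have "ereal t \<in> {ereal t | t. \<alpha> < t \<and> chiK K t < \<mu>}" using assms(1) by auto
  then have "r_mu \<mu> \<alpha> K \<le> ereal t" unfolding r_mu_def by (rule Inf_lower)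
  then show False using assms(2) by simp
qed

lemma tilde_mu_le: "tilde_mu \<mu> lam \<alpha> \<alpha>' K \<le> \<mu>"
  unfolding tilde_mu_def by auto

lemma sqrt_one_minus_sq_le:
  fixes F R n k :: real
  assumes "0 \<le> F" "0 < R" "0 \<le> n" "R\<^sup>2 = n\<^sup>2 + F\<^sup>2" "F / R \<le> k"
  shows "sqrt (1 - k\<^sup>2) \<le> n / R"
proof -
  have "(F / R)\<^sup>2 + (n / R)\<^sup>2 = (n\<^sup>2 + F\<^sup>2) / R\<^sup>2" by (simp add: power_divide add_divide_distrib)
  also have "\<dots> = 1" using assms(2) by (simp add: assms(4)[symmetric])
  finally have "(F / R)\<^sup>2 + (n / R)\<^sup>2 = 1" .
  moreover have "(F / R)\<^sup>2 \<le> k\<^sup>2" using assms(1,2,5) by (intro power_mono) auto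
  ultimately have "sqrt (1 - k\<^sup>2) \<le> sqrt ((n / R)\<^sup>2)" by (intro real_sqrt_le_mono) linarith
  then show ?thesis using assms(2,3) by simp
qed

text \<open>Below \<open>r_mu \<mu> \<alpha> K\<close> the gradient has norm at least \<open>\<mu>\<close>; beyond it, the bound
  \<open>FK (offset K \<alpha>) z < lammax\<close> forces the nearest points into a cone of half-angle
  \<open>arcsin (lammax / (r_mu \<mu> \<alpha> K - \<alpha>))\<close>, whose cosine is the second term of \<open>tilde_mu\<close>.\<close>

lemma tilde_mu_mult_infdist_le:
  fixes K :: "'a::euclidean_space set"
  assumes "closed K" "K \<noteq> {}" "0 < \<alpha>" "0 < lammax" "ereal (\<alpha> + lammax) < r_mu \<mu> \<alpha> K"
    and z: "\<alpha> < infdist z K" "FK (offset K \<alpha>) z < lammax"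
  shows "tilde_mu \<mu> lammax \<alpha> \<alpha> K * infdist z K \<le> norm (z - enc_center (ThetaK K z))"
proof -
  define R0 where "R0 = infdist z K"
  define n where "n = norm (z - enc_center (ThetaK K z))"
  have "0 < R0" using z(1) assms(3) by (simp add: R0_def)
  have "tilde_mu \<mu> lammax \<alpha> \<alpha> K \<le> n / R0"
  proof (cases "ereal R0 < r_mu \<mu> \<alpha> K")
    case True
    then have "\<mu> \<le> chiK K R0" using z(1) by (intro mu_le_chiK_below_r_mu) (simp_all add: R0_def)
    then show ?thesis
      using chiK_le_norm_gradK[of K z] norm_gradK[of K z] tilde_mu_le[of \<mu> lammax \<alpha> \<alpha> K]
      by (simp add: R0_def n_def)
  next
    case False
    then obtain r where r: "r_mu \<mu> \<alpha> K = ereal r" "\<alpha> + lammax < r" "r \<le> R0"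
      using assms(5) by (cases "r_mu \<mu> \<alpha> K") auto
    define F0 where "F0 = FK K z"
    have "F0 / R0 * (R0 - \<alpha>) < lammax"
      using z(2) FK_offset[OF assms(1-3) z(1)] by (simp add: R0_def F0_def mult.commute)
    then have "F0 / R0 < lammax / (R0 - \<alpha>)" using r assms(4) by (simp add: pos_less_divide_eq)
    also have "\<dots> \<le> lammax / (r - \<alpha>)" using r assms(4) by (intro divide_left_mono) auto
    finally have "F0 / R0 \<le> lammax / (r - \<alpha>)" by simp
    then have "sqrt (1 - (lammax / (r - \<alpha>))\<^sup>2) \<le> n / R0"
      using infdist_sq_eq[OF assms(1,2), of z] FK_nonneg[OF assms(1,2), of z] \<open>0 < R0\<close>
      by (intro sqrt_one_minus_sq_le) (simp_all add: R0_def n_def F0_def)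
    then show ?thesis using r(1) by (simp add: tilde_mu_def)
  qed
  then show ?thesis using \<open>0 < R0\<close> by (simp add: R0_def n_def pos_le_divide_eq)
qed

section \<open>Lipschitz continuity of the \<open>\<lambda>\<close>-medial axis\<close>

lemma infdist_le_Rmax:
  fixes K :: "'a::euclidean_space set"
  assumes "bounded (- K)" "K \<noteq> {}" "y \<notin> K"
  shows "infdist y K \<le> Rmax K"
proof -
  obtain k0 where k0: "k0 \<in> K" using assms(2) by blast
  obtain B where B: "\<forall>x\<in>- K. norm x \<le> B" using assms(1) by (auto simp: bounded_iff)
  have "bdd_above (RK K ` (- K))"
  proof (rule bdd_aboveI)
    fix t assume "t \<in> RK K ` (- K)"
    then obtain x where x: "x \<in> - K" "t = infdist x K" by (auto simp: RK_def)
    have "infdist x K \<le> norm x + norm k0"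
      using infdist_le[OF k0, of x] norm_triangle_ineq4[of x k0] by (simp add: dist_norm)
    moreover have "norm x \<le> B" using B x(1) by blast
    ultimately show "t \<le> B + norm k0" using x(2) by simp
  qed
  moreover have "infdist y K \<in> RK K ` (- K)" using assms(3) by (auto simp: RK_def)
  ultimately show ?thesis unfolding Rmax_def by (rule cSup_upper[rotated])
qed

lemma offset_ratio_gain:
  fixes \<alpha> R0 Rw RM F0 F1 \<rho> m :: real
  assumes "0 < \<alpha>" "\<alpha> < R0" "R0 \<le> Rw" "Rw \<le> RM" "0 \<le> F0" "F0 \<le> F1" "0 \<le> \<rho> * m"
    and growth: "R0\<^sup>2 + 2 * \<rho> * m \<le> Rw\<^sup>2"
  shows "(R0 - \<alpha>) / R0 * F0 + \<alpha> * F0 * \<rho> * m / (R0 * RM\<^sup>2) \<le> (Rw - \<alpha>) / Rw * F1"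
proof -
  have "0 < RM" "0 < Rw" using assms(1-4) by linarith+
  have "2 * (\<rho> * m) \<le> (Rw - R0) * (Rw + R0)" using growth by (simp add: power2_eq_square algebra_simps)
  also have "\<dots> \<le> (Rw - R0) * (2 * RM)" using assms(2-4) by (intro mult_left_mono) auto
  finally have "\<rho> * m \<le> (Rw - R0) * RM" by simp
  then have "\<rho> * m / RM\<^sup>2 \<le> (Rw - R0) * RM / RM\<^sup>2" by (simp add: divide_right_mono)
  also have "\<dots> = (Rw - R0) / RM" by (simp add: power2_eq_square)
  also have "\<dots> \<le> (Rw - R0) / Rw" using assms(3,4) \<open>0 < Rw\<close> by (intro divide_left_mono) auto
  finally have "\<alpha> * F0 / R0 * (\<rho> * m / RM\<^sup>2) \<le> \<alpha> * F0 / R0 * ((Rw - R0) / Rw)"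
    using assms(1,2,5) by (intro mult_left_mono) auto
  moreover have "(R0 - \<alpha>) / R0 * F0 + \<alpha> * F0 / R0 * ((Rw - R0) / Rw) = (Rw - \<alpha>) / Rw * F0"
    using assms(1,2) \<open>0 < Rw\<close> by (simp add: field_simps)
  moreover have "(Rw - \<alpha>) / Rw * F0 \<le> (Rw - \<alpha>) / Rw * F1"
    using assms(1-3,6) \<open>0 < Rw\<close> by (intro mult_left_mono) auto
  moreover have "\<alpha> * F0 * \<rho> * m / (R0 * RM\<^sup>2) = \<alpha> * F0 / R0 * (\<rho> * m / RM\<^sup>2)" by simp
  ultimately show ?thesis by linarith
qed

lemma FK_offset_gain:
  fixes K :: "'a::euclidean_space set"
  assumes "closed K" "K \<noteq> {}" "0 < \<alpha>" "\<alpha> < infdist z K" "FK K z \<le> FK K w"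
    and growth: "(infdist z K)\<^sup>2 + 2 * \<rho> * m \<le> (infdist w K)\<^sup>2" and "0 \<le> \<rho>" "0 \<le> m"
    and RM: "\<And>y. y \<notin> K \<Longrightarrow> infdist y K \<le> RM"
  shows "FK (offset K \<alpha>) z + \<alpha> * FK K z * \<rho> * m / (infdist z K * RM\<^sup>2) \<le> FK (offset K \<alpha>) w"
proof -
  have "0 \<le> 2 * \<rho> * m" using assms(7,8) by simp
  then have "(infdist z K)\<^sup>2 \<le> (infdist w K)\<^sup>2" using growth by simp
  then have "infdist z K \<le> infdist w K" by (rule power2_le_imp_le) (simp add: infdist_nonneg)
  then have "\<alpha> < infdist w K" using assms(4) by simp
  then have "w \<notin> K" using assms(3) by auto
  show ?thesis
    unfolding FK_offset[OF assms(1-4)] FK_offset[OF assms(1-3) \<open>\<alpha> < infdist w K\<close>]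
    using offset_ratio_gain[OF assms(3,4) \<open>infdist z K \<le> infdist w K\<close> RM[OF \<open>w \<notin> K\<close>]
        FK_nonneg[OF assms(1,2)] assms(5) _ growth] assms(7,8) by simp
qed

lemma intermediate_slope:
  fixes R0 F0 n lammin mt :: real
  assumes "0 < R0" "0 < lammin" "lammin < F0" "0 < mt" "mt \<le> 1" "mt * R0 \<le> n"
  obtains m where "0 < m" "m < n" "R0 * lammin * mt\<^sup>2 < F0 * m"
proof -
  have "R0 * lammin * mt\<^sup>2 \<le> R0 * lammin * mt"
    using assms(1,2,4,5) by (simp add: power2_eq_square mult_left_le)
  also have "\<dots> < F0 * (mt * R0)" using assms(1,3,4) by simp
  also have "\<dots> \<le> F0 * n" using assms(2,3,6) by simp
  finally have "R0 * lammin * mt\<^sup>2 < F0 * n" .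
  moreover have "0 < R0 * lammin * mt\<^sup>2" using assms(1,2,4) by simp
  ultimately show ?thesis
    using that[of "(R0 * lammin * mt\<^sup>2 / F0 + n) / 2"] assms(2,3) by (simp add: field_simps)
qed

lemma penalized_FK_ascent:
  fixes K :: "'a::euclidean_space set"
  assumes K: "closed K" "K \<noteq> {}" and "0 < \<alpha>" "0 < lammin" "0 < mt" "mt \<le> 1"
    and RM: "\<And>y. y \<notin> K \<Longrightarrow> infdist y K \<le> RM"
    and z: "\<alpha> < infdist z K" "lammin \<le> FK (offset K \<alpha>) z" "FK (offset K \<alpha>) z < b"
    and grad: "mt * infdist z K \<le> norm (z - enc_center (ThetaK K z))"
  defines "C \<equiv> RM\<^sup>2 / (\<alpha> * lammin * mt\<^sup>2)"
  shows "\<exists>w. FK (offset K \<alpha>) z + dist z w / C < min (FK (offset K \<alpha>) w) b"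
proof -
  define L where "L = offset K \<alpha>"
  define R0 where "R0 = infdist z K"
  define F0 where "F0 = FK K z"
  have "0 < R0" using z(1) assms(3) by (simp add: R0_def)
  have "z \<notin> K" using \<open>0 < R0\<close> by (auto simp: R0_def)
  then have "R0 \<le> RM" using RM by (simp add: R0_def)
  have Fs: "FK L z = (R0 - \<alpha>) / R0 * F0"
    using FK_offset[OF K assms(3) z(1)] by (simp add: L_def R0_def F0_def)
  have "lammin < F0"
    using FK_offset_less[OF K assms(3) z(1)] z(2) assms(4) by (simp add: F0_def)
  then obtain m where m: "0 < m" "m < norm (z - enc_center (ThetaK K z))" "R0 * lammin * mt\<^sup>2 < F0 * m"
    using intermediate_slope[OF \<open>0 < R0\<close> assms(4) _ assms(5,6)] grad by (auto simp: R0_def)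
  obtain \<rho>0 where \<rho>0: "0 < \<rho>0" "\<And>\<rho>. 0 < \<rho> \<Longrightarrow> \<rho> \<le> \<rho>0 \<Longrightarrow>
      \<exists>w\<in>cball z \<rho>. FK K z \<le> FK K w \<and> (infdist z K)\<^sup>2 + 2 * \<rho> * m \<le> (infdist w K)\<^sup>2"
    using infdist_ascent[OF K m(1,2)] by blast
  have "0 < C" using \<open>0 < R0\<close> \<open>R0 \<le> RM\<close> assms(3-5) by (simp add: C_def)
  define \<rho> where "\<rho> = min \<rho>0 (C * (b - FK L z) / 2)"
  have "0 < \<rho>" using \<rho>0(1) \<open>0 < C\<close> z(3) by (simp add: \<rho>_def L_def)
  then obtain w where w: "dist z w \<le> \<rho>" "F0 \<le> FK K w" "R0\<^sup>2 + 2 * \<rho> * m \<le> (infdist w K)\<^sup>2"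
    using \<rho>0(2)[of \<rho>] by (auto simp: \<rho>_def F0_def R0_def)
  have gain: "FK L z + \<alpha> * F0 * \<rho> * m / (R0 * RM\<^sup>2) \<le> FK L w"
    using FK_offset_gain[OF K assms(3) z(1) w(2)[unfolded F0_def] w(3)[unfolded R0_def] _ _ RM]
      \<open>0 < \<rho>\<close> m(1) by (simp add: L_def R0_def F0_def)
  have "dist z w / C \<le> \<rho> / C" using w(1) \<open>0 < C\<close> by (simp add: divide_right_mono)
  also have "\<rho> / C = \<alpha> * \<rho> / (R0 * RM\<^sup>2) * (R0 * lammin * mt\<^sup>2)"
    using \<open>0 < R0\<close> \<open>R0 \<le> RM\<close> assms(3-5) by (simp add: C_def)
  also have "\<dots> < \<alpha> * \<rho> / (R0 * RM\<^sup>2) * (F0 * m)"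
    using m(3) \<open>0 < \<rho>\<close> \<open>0 < R0\<close> \<open>R0 \<le> RM\<close> assms(3) by (intro mult_strict_left_mono) auto
  also have "\<dots> = \<alpha> * F0 * \<rho> * m / (R0 * RM\<^sup>2)" by simp
  finally have "dist z w / C < \<alpha> * F0 * \<rho> * m / (R0 * RM\<^sup>2)" .
  moreover have "\<rho> / C < b - FK L z"
  proof -
    have "\<rho> \<le> C * (b - FK L z) / 2" by (simp add: \<rho>_def)
    moreover have "0 < C * (b - FK L z)" using \<open>0 < C\<close> z(3) by (simp add: L_def)
    ultimately have "\<rho> < (b - FK L z) * C" by (simp add: mult.commute)
    then show ?thesis using \<open>0 < C\<close> by (simp add: pos_divide_less_eq)
  qed
  ultimately have "FK L z + dist z w / C < min (FK L w) b"
    using gain \<open>dist z w / C \<le> \<rho> / C\<close> by simp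
  then show ?thesis unfolding L_def by blast
qed

definition penalized_FK :: "'a::euclidean_space set \<Rightarrow> real \<Rightarrow> real \<Rightarrow> 'a \<Rightarrow> 'a \<Rightarrow> real" where
  "penalized_FK L b C x z = min (FK L z) b - dist x z / C"

lemma penalized_FK_attains_sup:
  fixes L :: "'a::euclidean_space set"
  assumes "closed L" "L \<noteq> {}" "0 < C" "0 \<le> M"
  shows "\<exists>z\<in>cball x M. \<forall>z'\<in>cball x M. penalized_FK L b C x z' \<le> penalized_FK L b C x z"
proof (rule usc_attains_sup)
  fix z and e :: real
  assume "0 < e"
  then obtain \<delta> where \<delta>: "0 < \<delta>" "\<And>z'. dist z' z < \<delta> \<Longrightarrow> FK L z' \<le> FK L z + e / 2"
    using FK_upper_semicontinuous[OF assms(1,2), of "e / 2" z] by auto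
  have "penalized_FK L b C x z' < penalized_FK L b C x z + e" if "dist z' z < min \<delta> (C * e / 4)" for z'
  proof -
    have "FK L z' \<le> FK L z + e / 2" using \<delta>(2) that by simp
    then have "min (FK L z') b \<le> min (FK L z) b + e / 2" using \<open>0 < e\<close> by (auto simp: min_def)
    moreover have "dist x z / C \<le> dist x z' / C + dist z' z / C"
      using dist_triangle[of x z z'] \<open>0 < C\<close> by (simp add: add_divide_distrib[symmetric] divide_right_mono)
    moreover have "dist z' z / C < e / 4" using that \<open>0 < C\<close> by (simp add: pos_divide_less_eq mult.commute)
    ultimately show ?thesis using \<open>0 < e\<close> unfolding penalized_FK_def by linarith
  qed
  then show "\<exists>d>0. \<forall>z'\<in>cball x M. dist z' z < d \<longrightarrow> penalized_FK L b C x z' < penalized_FK L b C x z + e"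
    using \<delta>(1) \<open>0 < C\<close> \<open>0 < e\<close> by (intro exI[of _ "min \<delta> (C * e / 4)"]) auto
qed (use assms(4) in auto)

text \<open>A maximiser over the ball of radius \<open>C (b - a)\<close> is global, as the objective is below \<open>a\<close>
  outside that ball.\<close>

lemma penalized_FK_global_max:
  fixes L :: "'a::euclidean_space set"
  assumes "closed L" "L \<noteq> {}" "0 < C" "a \<le> b" "a \<le> FK L x"
  obtains z where "dist x z \<le> C * (b - a)" "a \<le> penalized_FK L b C x z"
    "\<And>w. penalized_FK L b C x w \<le> penalized_FK L b C x z"
proof -
  obtain z where z: "z \<in> cball x (C * (b - a))"
    "\<And>z'. z' \<in> cball x (C * (b - a)) \<Longrightarrow> penalized_FK L b C x z' \<le> penalized_FK L b C x z"
    using penalized_FK_attains_sup[OF assms(1-3), of "C * (b - a)" x b] assms(3,4) by auto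
  have "a \<le> penalized_FK L b C x x" using assms(4,5) by (simp add: penalized_FK_def)
  also have "\<dots> \<le> penalized_FK L b C x z" using z(2) assms(3,4) by simp
  finally have "a \<le> penalized_FK L b C x z" .
  moreover have "penalized_FK L b C x w \<le> penalized_FK L b C x z" for w
  proof (cases "w \<in> cball x (C * (b - a))")
    case False
    then have "b - a < dist x w / C" using assms(3) by (simp add: pos_less_divide_eq mult.commute)
    then show ?thesis using \<open>a \<le> penalized_FK L b C x z\<close> by (simp add: penalized_FK_def)
  qed (rule z(2))
  ultimately show ?thesis using that z(1) by simp
qed

lemma axl_near_point:
  fixes K :: "'a::euclidean_space set"
  assumes K: "closed K" "bounded (- K)" and "0 < \<alpha>" "0 < lammax" "\<mu> \<le> 1"
    and r_mu: "ereal (\<alpha> + lammax) < r_mu \<mu> \<alpha> K" and "0 < tilde_mu \<mu> lammax \<alpha> \<alpha> K"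
    and ab: "0 < lammin" "lammin \<le> a" "a \<le> b" "b \<le> lammax" and x: "x \<in> axl a \<alpha> K"
  shows "\<exists>z\<in>axl b \<alpha> K. dist x z \<le> (Rmax K)\<^sup>2 / (\<alpha> * lammin * (tilde_mu \<mu> lammax \<alpha> \<alpha> K)\<^sup>2) * (b - a)"
proof -
  define L where "L = offset K \<alpha>"
  define mt where "mt = tilde_mu \<mu> lammax \<alpha> \<alpha> K"
  define C where "C = (Rmax K)\<^sup>2 / (\<alpha> * lammin * mt\<^sup>2)"
  have "K \<noteq> {}" using K(2) not_bounded_UNIV by auto
  have out_L: "\<alpha> < infdist y K" if "0 < FK L y" for y
    using FK_eq_0[of y L] that by (force simp: L_def offset_def)
  have "a \<le> FK L x" using x by (simp add: axl_def L_def)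
  then have "\<alpha> < infdist x K" using out_L ab(1,2) by simp
  then have "0 < Rmax K" using infdist_le_Rmax[OF K(2) \<open>K \<noteq> {}\<close>, of x] assms(3) by force
  then have "0 < C" using assms(3,7) ab(1) by (simp add: C_def mt_def)
  have "offset K \<alpha> \<noteq> {}" using subset_offset[of \<alpha> K] \<open>K \<noteq> {}\<close> assms(3) by auto
  then obtain zs where zs: "dist x zs \<le> C * (b - a)" "a \<le> penalized_FK L b C x zs"
    "\<And>w. penalized_FK L b C x w \<le> penalized_FK L b C x zs"
    unfolding L_def
    by (rule penalized_FK_global_max[OF closed_offset _ \<open>0 < C\<close> ab(3) \<open>a \<le> FK L x\<close>[unfolded L_def]]) blast
  show ?thesis
  proof (cases "b \<le> FK L zs")
    case True
    then show ?thesis using zs(1) by (auto simp: axl_def L_def C_def mt_def)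
  next
    case False
    then have "a \<le> FK L zs - dist x zs / C" using zs(2) by (simp add: penalized_FK_def)
    moreover have "0 \<le> dist x zs / C" using \<open>0 < C\<close> by simp
    ultimately have "lammin \<le> FK (offset K \<alpha>) zs" using ab(2) by (simp add: L_def)
    then have zs_out: "\<alpha> < infdist zs K" using out_L ab(1) by (simp add: L_def)
    have "FK (offset K \<alpha>) zs < b" using False by (simp add: L_def)
    moreover have "mt * infdist zs K \<le> norm (zs - enc_center (ThetaK K zs))"
      using tilde_mu_mult_infdist_le[OF K(1) \<open>K \<noteq> {}\<close> assms(3,4) r_mu zs_out] False ab(4)
      by (simp add: L_def mt_def)
    moreover have "0 < mt" "mt \<le> 1" using assms(5,7) tilde_mu_le[of \<mu> lammax \<alpha> \<alpha> K] by (simp_all add: mt_def)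
    ultimately obtain w where "FK L zs + dist zs w / C < min (FK L w) b"
      using penalized_FK_ascent[OF K(1) \<open>K \<noteq> {}\<close> assms(3) ab(1) \<open>0 < mt\<close> \<open>mt \<le> 1\<close>
          infdist_le_Rmax[OF K(2) \<open>K \<noteq> {}\<close>] zs_out \<open>lammin \<le> FK (offset K \<alpha>) zs\<close>]
      unfolding L_def C_def by blast
    moreover have "dist x w / C \<le> dist x zs / C + dist zs w / C"
      using dist_triangle[of x w zs] \<open>0 < C\<close> by (simp add: add_divide_distrib[symmetric] divide_right_mono)
    ultimately have "penalized_FK L b C x zs < penalized_FK L b C x w"
      using False by (auto simp: penalized_FK_def min_def)
    then show ?thesis using zs(3)[of w] by simp
  qed
qed

lemma axl_antimono: "a \<le> b \<Longrightarrow> axl b \<alpha> K \<subseteq> axl a \<alpha> K"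
  by (auto simp: axl_def)

lemma dH_commute: "dH A B = dH B A"
  by (simp add: dH_def max.commute conj_commute disj_commute)

lemma dH_le_of_subset:
  fixes A B :: "'a::metric_space set"
  assumes "B \<subseteq> A" "\<And>x. x \<in> A \<Longrightarrow> \<exists>z\<in>B. dist x z \<le> D" "0 \<le> D"
  shows "dH A B \<le> ereal D"
proof -
  have "(SUP x\<in>A. ereal (infdist x B)) \<le> ereal D"
  proof (rule SUP_least)
    fix x assume "x \<in> A"
    then obtain z where "z \<in> B" "dist x z \<le> D" using assms(2) by blast
    then show "ereal (infdist x B) \<le> ereal D" using infdist_le[of z B x] by simp
  qed
  moreover have "(SUP y\<in>B. ereal (infdist y A)) \<le> ereal D"
    using assms(1,3) by (intro SUP_least) (auto simp: in_closed_iff_infdist_zero)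
  moreover have "A = {} \<longleftrightarrow> B = {}" using assms(1,2) by blast
  ultimately show ?thesis using assms(3) by (auto simp: dH_def)
qed

theorem lemma9p4:
  fixes K :: "'a::euclidean_space set"
    and \<alpha> lammax lammin \<mu> lam1 lam2 :: real
  assumes "closed K" and "bounded (- K)"
    and "\<alpha> > 0" and "lammax > 0" and "0 < \<mu>" and "\<mu> \<le> 1"
    and "r_mu \<mu> \<alpha> K > ereal (\<alpha> + lammax)"
    and "tilde_mu \<mu> lammax \<alpha> \<alpha> K > 0"
    and "0 < lammin" and "lammin \<le> lammax"
    and "lam1 \<in> {lammin..lammax}" and "lam2 \<in> {lammin..lammax}"
  shows "dH (axl lam1 \<alpha> K) (axl lam2 \<alpha> K)
           \<le> ereal ((Rmax K)\<^sup>2 / (\<alpha> * lammin * (tilde_mu \<mu> lammax \<alpha> \<alpha> K)\<^sup>2) * \<bar>lam1 - lam2\<bar>)"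
proof -
  define C where "C = (Rmax K)\<^sup>2 / (\<alpha> * lammin * (tilde_mu \<mu> lammax \<alpha> \<alpha> K)\<^sup>2)"
  have "0 \<le> C" using assms(3,9) by (simp add: C_def)
  have dH_le: "dH (axl a \<alpha> K) (axl b \<alpha> K) \<le> ereal (C * (b - a))"
    if "a \<in> {lammin..lammax}" "b \<in> {lammin..lammax}" "a \<le> b" for a b
    using that \<open>0 \<le> C\<close>
    by (intro dH_le_of_subset axl_antimono axl_near_point[OF assms(1-4,6-9), folded C_def]) auto
  show ?thesis
  proof (cases "lam1 \<le> lam2")
    case True
    then show ?thesis using dH_le[OF assms(11,12)] by (simp add: C_def)
  next
    case False
    then show ?thesis using dH_le[OF assms(12,11)] by (simp add: C_def dH_commute)
  qed
qed

end
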